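(* In the setting below, let $m,n$ be the numbers of training and calibration data; let $\hat q_{\beta,m}(x)$ be an estimate (from the training data) of the $\beta$-th conditional quantile $q_\beta(x)$ of $P^{\pi^*}_{Y\mid X=x}$, let $\hat w_m(x,y)$ be an estimate (from the training data) of $w(x,y)$, and let $\hat C_{m,n}(x)$ be the conformal set constructed with weights $\hat w_m$ and score $s(x,y)=\max\{y-\hat q_{\alpha_{hi},m}(x),\ \hat q_{\alpha_{lo},m}(x)-y\}$, where $\alpha_{hi}-\alpha_{lo}=1-\alpha$. Assume: (1) $\lim_{m\to\infty}\mathbb{E}_{P^{\pi^b}_{X,Y}}|\hat w_m(X,Y)-w(X,Y)|=0$; (2) there exist $r,b_1,b_2>0$ such that $P^{\pi^*}(y\mid x)\in[b_1,b_2]$ uniformly over all $(x,y)$ with $y\in[q_{\alpha_{lo}}(x)-r,q_{\alpha_{lo}}(x)+r]\cup[q_{\alpha_{hi}}(x)-r,q_{\alpha_{hi}}(x)+r]$; (3) there exists $k>0$ with $\lim_{m\to\infty}\mathbb{E}_{X\sim P_X}[H_m^k(X)]=0$, where $H_m(x)=\max\{|\hat q_{\alpha_{lo},m}(x)-q_{\alpha_{lo}}(x)|,|\hat q_{\alpha_{hi},m}(x)-q_{\alpha_{hi}}(x)|\}$. Then for any $t>0$, $$\lim_{m,n\to\infty}\mathbb{P}\Big(\mathbb{P}_{Y\sim P^{\pi^*}_{Y\mid X}}(Y\in\hat C_{m,n}(X)\mid X)\le1-\alpha-t\Big)=0.$$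
   Context: Setting: covariate law $P_X$, outcome law $P(y\mid x,a)$, policies $\pi^b,\pi^*$; $P^\pi_{X,Y}$ is the law of $(X,Y)$ with $X\sim P_X$, $A\mid X\sim\pi$, $Y\mid X,A\sim P(\cdot\mid X,A)$, with conditional density $P^\pi(y\mid x)$; $P^{\pi^*}_{X,Y}\ll P^{\pi^b}_{X,Y}$ and $w=\mathrm{d}P^{\pi^*}_{X,Y}/\mathrm{d}P^{\pi^b}_{X,Y}$. Training data (size $m$) and calibration data $\{(X_i,Y_i)\}_{i=1}^n$ are independent i.i.d. samples from $P^{\pi^b}_{X,Y}$. Conformal set with weights $v$: $V_i=s(X_i,Y_i)$, $\hat F^{x,y}=\sum_{i=1}^n\frac{v(X_i,Y_i)}{\sum_jv(X_j,Y_j)+v(x,y)}\delta_{V_i}+\frac{v(x,y)}{\sum_jv(X_j,Y_j)+v(x,y)}\delta_\infty$, and $\hat C(x)=\{y:s(x,y)\le\mathrm{Quantile}_{1-\alpha}(\hat F^{x,y})\}$, with $\mathrm{Quantile}_\beta(F)=\inf\{z:F((-\infty,z])\ge\beta\}$. The test covariate $X\sim P_X$ is independent of all data; the outer probability is over data and $X$. *)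

theory Defs
  imports "HOL-Probability.Probability"
begin

definition joint_law ::
  "'x measure \<Rightarrow> ('x \<Rightarrow> 'a measure) \<Rightarrow> ('x \<times> 'a \<Rightarrow> real measure) \<Rightarrow> ('x \<times> real) measure" where
  "joint_law PX pol Pout =
     PX \<bind> (\<lambda>x. pol x \<bind> (\<lambda>a. Pout (x, a) \<bind> (\<lambda>y. return (PX \<Otimes>\<^sub>M borel) (x, y))))"

definition cond_law ::
  "('x \<Rightarrow> 'a measure) \<Rightarrow> ('x \<times> 'a \<Rightarrow> real measure) \<Rightarrow> 'x \<Rightarrow> real measure" where
  "cond_law pol Pout x = pol x \<bind> (\<lambda>a. Pout (x, a))"

definition quantile_of :: "real \<Rightarrow> real measure \<Rightarrow> real" where
  "quantile_of b M = Inf {z. measure M {..z} \<ge> b}"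

(* weighted empirical cdf of F^{x,y}: atoms V i with weights v i, atom at +infinity with weight v0 *)
definition wcdf :: "nat \<Rightarrow> (nat \<Rightarrow> real) \<Rightarrow> (nat \<Rightarrow> real) \<Rightarrow> real \<Rightarrow> ereal \<Rightarrow> real" where
  "wcdf n v V v0 z =
     (let S = (\<Sum>i<n. v i) + v0 in
       (\<Sum>i<n. if ereal (V i) \<le> z then v i / S else 0) + (if z = \<infinity> then v0 / S else 0))"

definition wquantile :: "real \<Rightarrow> nat \<Rightarrow> (nat \<Rightarrow> real) \<Rightarrow> (nat \<Rightarrow> real) \<Rightarrow> real \<Rightarrow> ereal" where
  "wquantile b n v V v0 = Inf {z. wcdf n v V v0 z \<ge> b}"

definition conformal_set ::
  "real \<Rightarrow> nat \<Rightarrow> (nat \<Rightarrow> 'x \<times> real) \<Rightarrow> ('x \<Rightarrow> real \<Rightarrow> real) \<Rightarrow> ('x \<Rightarrow> real \<Rightarrow> real) \<Rightarrow> 'x \<Rightarrow> real set" where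
  "conformal_set \<alpha> n Z vw s x =
     {y. ereal (s x y) \<le> wquantile (1 - \<alpha>) n (\<lambda>i. vw (fst (Z i)) (snd (Z i)))
                                          (\<lambda>i. s (fst (Z i)) (snd (Z i))) (vw x y)}"

end

theory Submission
  imports Defs
begin

(* Fix a small \<zeta> > 0.  When the estimated quantiles are \<zeta>/2-accurate, the scores \<le> -\<zeta> form a band
   of target probability at most 1 - \<alpha> - b1 \<zeta> / 2 (lower density bound).  Hence, if the
   estimated weights are close to w on the calibration sample and the truncated weights min w K
   concentrate (Hoeffding), the calibration scores \<le> -\<zeta> carry less than a (1 - \<alpha>) share of the
   weights, and the conformal set contains the band [qlo_hat + \<zeta>, qhi_hat - \<zeta>] up to the points
   of negative estimated weight.  By the upper density bound that band has conditional probability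
   at least 1 - \<alpha> - 3 b2 \<zeta>.  The exceptional events (large quantile or weight errors: Markov
   with (3) and (1); a heavy weight tail above K: Markov and dominated convergence; deviations of
   the truncated weights: Hoeffding) are controlled at once by integrating a single nonnegative
   majorant that is \<ge> 1 on the undercoverage event. *)

lemma joint_law_kernel_measurable:
  assumes "pol \<in> PX \<rightarrow>\<^sub>M prob_algebra Act" and "Pout \<in> PX \<Otimes>\<^sub>M Act \<rightarrow>\<^sub>M prob_algebra borel"
  shows "(\<lambda>x. pol x \<bind> (\<lambda>a. Pout (x, a) \<bind> (\<lambda>y. return (PX \<Otimes>\<^sub>M borel) (x, y))))
           \<in> PX \<rightarrow>\<^sub>M prob_algebra (PX \<Otimes>\<^sub>M borel)"
  using assms by measurable

lemma cond_law_measurable: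
  assumes "pol \<in> PX \<rightarrow>\<^sub>M prob_algebra Act" and "Pout \<in> PX \<Otimes>\<^sub>M Act \<rightarrow>\<^sub>M prob_algebra borel"
  shows "cond_law pol Pout \<in> PX \<rightarrow>\<^sub>M prob_algebra borel"
  using assms unfolding cond_law_def by measurable

lemma real_distribution_cond_law:
  assumes "pol \<in> PX \<rightarrow>\<^sub>M prob_algebra Act" and "Pout \<in> PX \<Otimes>\<^sub>M Act \<rightarrow>\<^sub>M prob_algebra borel"
    and "x \<in> space PX"
  shows "real_distribution (cond_law pol Pout x)"
  using measurable_space[OF cond_law_measurable[OF assms(1,2)] assms(3)]
  by (simp add: space_prob_algebra real_distribution_def real_distribution_axioms_def)

lemma sets_joint_law:
  assumes "prob_space PX" and "pol \<in> PX \<rightarrow>\<^sub>M prob_algebra Act"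
    and "Pout \<in> PX \<Otimes>\<^sub>M Act \<rightarrow>\<^sub>M prob_algebra borel"
  shows "sets (joint_law PX pol Pout) = sets (PX \<Otimes>\<^sub>M borel)"
  unfolding joint_law_def using assms(1)
  by (intro sets_bind'[OF _ joint_law_kernel_measurable[OF assms(2,3)]]) (simp add: space_prob_algebra)

lemma prob_space_joint_law:
  assumes "prob_space PX" and "pol \<in> PX \<rightarrow>\<^sub>M prob_algebra Act"
    and "Pout \<in> PX \<Otimes>\<^sub>M Act \<rightarrow>\<^sub>M prob_algebra borel"
  shows "prob_space (joint_law PX pol Pout)"
  unfolding joint_law_def using assms(1)
  by (intro prob_space_bind'[OF _ joint_law_kernel_measurable[OF assms(2,3)]]) (simp add: space_prob_algebra)

lemma emeasure_joint_law:
  assumes PX: "prob_space PX"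
    and pol: "pol \<in> PX \<rightarrow>\<^sub>M prob_algebra Act"
    and Pout: "Pout \<in> PX \<Otimes>\<^sub>M Act \<rightarrow>\<^sub>M prob_algebra borel"
    and A: "A \<in> sets (PX \<Otimes>\<^sub>M borel)"
  shows "emeasure (joint_law PX pol Pout) A = (\<integral>\<^sup>+x. emeasure (cond_law pol Pout x) (Pair x -` A) \<partial>PX)"
proof -
  have "emeasure (joint_law PX pol Pout) A
      = (\<integral>\<^sup>+x. emeasure (pol x \<bind> (\<lambda>a. Pout (x, a) \<bind> (\<lambda>y. return (PX \<Otimes>\<^sub>M borel) (x, y)))) A \<partial>PX)"
    unfolding joint_law_def
    by (rule emeasure_bind[OF prob_space.not_empty[OF PX]
          measurable_prob_algebraD[OF joint_law_kernel_measurable[OF pol Pout]] A])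
  also have "\<dots> = (\<integral>\<^sup>+x. emeasure (cond_law pol Pout x) (Pair x -` A) \<partial>PX)"
  proof (rule nn_integral_cong)
    fix x assume x: "x \<in> space PX"
    have polx: "pol x \<in> space (prob_algebra Act)" using measurable_space[OF pol x] .
    have sec: "Pair x -` A \<in> sets borel" using A by (rule sets_Pair1)
    have K: "(\<lambda>a. Pout (x, a) \<bind> (\<lambda>y. return (PX \<Otimes>\<^sub>M borel) (x, y))) \<in> Act \<rightarrow>\<^sub>M prob_algebra (PX \<Otimes>\<^sub>M borel)"
      "(\<lambda>a. Pout (x, a)) \<in> Act \<rightarrow>\<^sub>M prob_algebra borel"
      using Pout x by measurable
    have "emeasure (Pout (x, a) \<bind> (\<lambda>y. return (PX \<Otimes>\<^sub>M borel) (x, y))) A = emeasure (Pout (x, a)) (Pair x -` A)"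
      if a: "a \<in> space (pol x)" for a
    proof -
      have "a \<in> space Act" using a polx by (auto simp: space_prob_algebra dest: sets_eq_imp_space_eq)
      then have Po: "Pout (x, a) \<in> space (prob_algebra borel)"
        using measurable_space[OF Pout, of "(x,a)"] x by (auto simp: space_pair_measure)
      have R: "(\<lambda>y. return (PX \<Otimes>\<^sub>M borel) (x, y)) \<in> borel \<rightarrow>\<^sub>M prob_algebra (PX \<Otimes>\<^sub>M borel)"
        using x by measurable
      have "emeasure (Pout (x, a) \<bind> (\<lambda>y. return (PX \<Otimes>\<^sub>M borel) (x, y))) A
          = (\<integral>\<^sup>+y. indicator (Pair x -` A) y \<partial>Pout (x, a))"
        using A by (simp add: emeasure_bind_prob_algebra[OF Po R A] indicator_def)
      also have "\<dots> = emeasure (Pout (x, a)) (Pair x -` A)"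
        using Po sec by (intro nn_integral_indicator) (simp add: space_prob_algebra)
      finally show ?thesis .
    qed
    then show "emeasure (pol x \<bind> (\<lambda>a. Pout (x, a) \<bind> (\<lambda>y. return (PX \<Otimes>\<^sub>M borel) (x, y)))) A
             = emeasure (cond_law pol Pout x) (Pair x -` A)"
      unfolding cond_law_def emeasure_bind_prob_algebra[OF polx K(1) A] emeasure_bind_prob_algebra[OF polx K(2) sec]
      by (intro nn_integral_cong) simp
  qed
  finally show ?thesis .
qed

lemma (in real_distribution) measure_Ioc_eq_cdf_diff:
  "a \<le> b \<Longrightarrow> measure M {a<..b} = cdf M b - cdf M a"
  using finite_borel_measure.cdf_diff_eq[OF finite_borel_measure_M] by (cases "a = b") auto

lemma (in real_distribution) cdf_diff_le_measure_Ioc: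
  "cdf M b - cdf M a \<le> measure M {a<..b}"
  using measure_Ioc_eq_cdf_diff[of a b] cdf_nondecreasing[of b a] measure_nonneg[of M "{a<..b}"]
  by (cases "a \<le> b") auto

lemma (in real_distribution) quantile_of_le_iff:
  assumes b0: "0 < \<beta>" and b1: "\<beta> < 1"
  shows "quantile_of \<beta> M \<le> c \<longleftrightarrow> \<beta> \<le> cdf M c"
proof -
  define S where "S = {z. \<beta> \<le> cdf M z}"
  have q: "quantile_of \<beta> M = Inf S"
    unfolding quantile_of_def S_def cdf_def ..
  obtain z1 where z1: "\<And>z. z \<ge> z1 \<Longrightarrow> cdf M z > \<beta>"
    using order_tendstoD(1)[OF cdf_lim_at_top_prob b1] by (auto simp: eventually_at_top_linorder)
  have Sne: "S \<noteq> {}" using z1[of z1] unfolding S_def by (auto intro!: exI[of _ z1])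
  obtain z0 where z0: "\<And>z. z \<le> z0 \<Longrightarrow> cdf M z < \<beta>"
    using order_tendstoD(2)[OF cdf_lim_at_bot b0] by (auto simp: eventually_at_bot_linorder)
  have bdd: "bdd_below S"
  proof (rule bdd_belowI)
    fix s assume "s \<in> S"
    then show "z0 \<le> s" using z0[of s] unfolding S_def by (metis linorder_not_le mem_Collect_eq order.strict_iff_not)
  qed
  have Fq: "\<beta> \<le> cdf M (Inf S)"
  proof (rule ccontr)
    assume "\<not> \<beta> \<le> cdf M (Inf S)"
    then have lt: "cdf M (Inf S) < \<beta>" by simp
    have "(cdf M \<longlongrightarrow> cdf M (Inf S)) (at_right (Inf S))"
      using cdf_is_right_cont[of "Inf S"] by (simp add: continuous_within)
    from order_tendstoD(2)[OF this lt]
    obtain b where b: "b > Inf S" "\<And>y. y > Inf S \<Longrightarrow> y < b \<Longrightarrow> cdf M y < \<beta>"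
      by (auto simp: eventually_at_right_field)
    obtain s where s: "s \<in> S" "s < b" using cInf_lessD[OF Sne b(1)] by auto
    define y where "y = (Inf S + b) / 2"
    have y: "y > Inf S" "y < b" using b(1) by (auto simp: y_def)
    have Fs: "\<beta> \<le> cdf M s" using s(1) by (simp add: S_def)
    show False
    proof (cases "s \<le> y")
      case True
      then show False using Fs b(2)[OF y] cdf_nondecreasing[OF True] by linarith
    next
      case False
      then show False using Fs b(2)[of s] y s(2) by linarith
    qed
  qed
  show ?thesis
  proof
    assume "quantile_of \<beta> M \<le> c"
    then show "\<beta> \<le> cdf M c" using Fq cdf_nondecreasing by (simp add: q) (meson order_trans)
  next
    assume "\<beta> \<le> cdf M c"
    then show "quantile_of \<beta> M \<le> c" unfolding q by (intro cInf_lower bdd) (simp add: S_def)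
  qed
qed

lemma emeasure_density_Ioc_le:
  fixes f :: "real \<Rightarrow> real"
  assumes "f \<in> borel_measurable borel" and "a \<le> b" and "0 \<le> B" and "\<forall>y\<in>{a<..b}. f y \<le> B"
  shows "emeasure (density lborel f) {a<..b} \<le> ennreal (B * (b - a))"
proof -
  have "emeasure (density lborel f) {a<..b} = (\<integral>\<^sup>+y. ennreal (f y) * indicator {a<..b} y \<partial>lborel)"
    using assms(1) by (subst emeasure_density) auto
  also have "\<dots> \<le> (\<integral>\<^sup>+y. ennreal B * indicator {a<..b} y \<partial>lborel)"
    using assms(4) by (intro nn_integral_mono) (auto simp: indicator_def intro: ennreal_leI)
  finally show ?thesis
    using assms(2,3) by (simp add: nn_integral_cmult_indicator ennreal_mult)
qed

lemma emeasure_density_Ioc_ge: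
  fixes f :: "real \<Rightarrow> real"
  assumes "f \<in> borel_measurable borel" and "a \<le> b" and "0 \<le> B" and "\<forall>y\<in>{a<..b}. B \<le> f y"
  shows "ennreal (B * (b - a)) \<le> emeasure (density lborel f) {a<..b}"
proof -
  have "ennreal (B * (b - a)) = (\<integral>\<^sup>+y. ennreal B * indicator {a<..b} y \<partial>lborel)"
    using assms(2,3) by (simp add: nn_integral_cmult_indicator ennreal_mult)
  also have "\<dots> \<le> (\<integral>\<^sup>+y. ennreal (f y) * indicator {a<..b} y \<partial>lborel)"
    using assms(4) by (intro nn_integral_mono) (auto simp: indicator_def intro: ennreal_leI)
  also have "\<dots> = emeasure (density lborel f) {a<..b}"
    using assms(1) by (subst emeasure_density) auto
  finally show ?thesis .
qed

lemma (in real_distribution) cdf_near_quantile: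
  fixes f :: "real \<Rightarrow> real"
  assumes b0: "0 < \<beta>" and b1: "\<beta> < 1"
    and Mdens: "M = density lborel f" and f: "f \<in> borel_measurable borel"
    and r: "r > 0" and c1: "c1 > 0" and c2: "c2 > 0"
    and bnd: "\<forall>y. \<bar>y - quantile_of \<beta> M\<bar> \<le> r \<longrightarrow> c1 \<le> f y \<and> f y \<le> c2"
  shows "cdf M (quantile_of \<beta> M) = \<beta>"
    and "\<And>c. 0 \<le> c \<Longrightarrow> c \<le> r \<Longrightarrow> \<beta> + c1 * c \<le> cdf M (quantile_of \<beta> M + c)"
    and "\<And>c. 0 \<le> c \<Longrightarrow> c \<le> r \<Longrightarrow> cdf M (quantile_of \<beta> M + c) \<le> \<beta> + c2 * c"
    and "\<And>c. 0 \<le> c \<Longrightarrow> c \<le> r \<Longrightarrow> \<beta> - c2 * c \<le> cdf M (quantile_of \<beta> M - c)"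
    and "\<And>c. 0 \<le> c \<Longrightarrow> c \<le> r \<Longrightarrow> cdf M (quantile_of \<beta> M - c) \<le> \<beta> - c1 * c"
proof -
  define q where "q = quantile_of \<beta> M"
  have iff: "\<And>c. q \<le> c \<longleftrightarrow> \<beta> \<le> cdf M c" unfolding q_def by (rule quantile_of_le_iff[OF b0 b1])
  have up: "cdf M b - cdf M a \<le> c2 * (b - a)" if "q - r \<le> a" "a \<le> b" "b \<le> q + r" for a b
  proof -
    have "emeasure M {a<..b} \<le> ennreal (c2 * (b - a))"
      unfolding Mdens using that bnd c2
      by (intro emeasure_density_Ioc_le[OF f]) (auto simp: q_def abs_le_iff)
    then show ?thesis using that c2 by (simp add: emeasure_eq_measure measure_Ioc_eq_cdf_diff)
  qed
  have lo: "c1 * (b - a) \<le> cdf M b - cdf M a" if "q - r \<le> a" "a \<le> b" "b \<le> q + r" for a b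
  proof -
    have "ennreal (c1 * (b - a)) \<le> emeasure M {a<..b}"
      unfolding Mdens using that bnd c1
      by (intro emeasure_density_Ioc_ge[OF f]) (auto simp: q_def abs_le_iff)
    then have "c1 * (b - a) \<le> measure M {a<..b}" using that c1 by (simp add: emeasure_eq_measure)
    then show ?thesis using that by (simp add: measure_Ioc_eq_cdf_diff)
  qed
  have Fq: "cdf M q = \<beta>"
  proof (rule antisym)
    show "cdf M q \<le> \<beta>"
    proof (rule ccontr)
      assume "\<not> cdf M q \<le> \<beta>"
      define d where "d = min r ((cdf M q - \<beta>) / (2 * c2))"
      have d0: "d > 0" using r c2 \<open>\<not> cdf M q \<le> \<beta>\<close> by (auto simp: d_def)
      have "cdf M (q - d) < \<beta>" using iff[of "q - d"] d0 by auto
      moreover have "cdf M q - cdf M (q - d) \<le> c2 * d"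
        using up[of "q - d" q] d0 by (auto simp: d_def)
      moreover have "c2 * d \<le> (cdf M q - \<beta>) / 2"
        using c2 by (auto simp: d_def field_simps min_def)
      ultimately show False using \<open>\<not> cdf M q \<le> \<beta>\<close> by argo
    qed
  qed (use iff[of q] in simp)
  then show "cdf M (quantile_of \<beta> M) = \<beta>" by (simp add: q_def)
  fix c assume c: "0 \<le> c" "c \<le> r"
  show "\<beta> + c1 * c \<le> cdf M (quantile_of \<beta> M + c)"
    using lo[of q "q + c"] c r Fq by (simp add: q_def[symmetric])
  show "cdf M (quantile_of \<beta> M + c) \<le> \<beta> + c2 * c"
    using up[of q "q + c"] c r Fq by (simp add: q_def[symmetric])
  show "\<beta> - c2 * c \<le> cdf M (quantile_of \<beta> M - c)"
    using up[of "q - c" q] c r Fq by (simp add: q_def[symmetric])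
  show "cdf M (quantile_of \<beta> M - c) \<le> \<beta> - c1 * c"
    using lo[of "q - c" q] c r Fq by (simp add: q_def[symmetric])
qed

lemma wquantile_ge_of_small_mass:
  fixes \<zeta> :: real
  assumes b: "0 < b" and sv: "0 < (\<Sum>i<n. v i)" and v0: "0 \<le> v0"
    and T: "(\<Sum>i<n. if V i \<le> -\<zeta> then max (v i) 0 else 0) < b * (\<Sum>i<n. v i)"
  shows "ereal (-\<zeta>) \<le> wquantile b n v V v0"
  unfolding wquantile_def
proof (rule Inf_greatest)
  fix z assume "z \<in> {z. b \<le> wcdf n v V v0 z}"
  then have bz: "b \<le> wcdf n v V v0 z" by simp
  show "ereal (-\<zeta>) \<le> z"
  proof (rule ccontr)
    assume "\<not> ereal (-\<zeta>) \<le> z"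
    then have zl: "z < ereal (-\<zeta>)" by simp
    define S where "S = (\<Sum>i<n. v i) + v0"
    have S0: "S > 0" using sv v0 by (simp add: S_def)
    have "wcdf n v V v0 z = (\<Sum>i<n. if ereal (V i) \<le> z then v i / S else 0)"
      unfolding S_def wcdf_def Let_def using zl by auto
    also have "\<dots> \<le> (\<Sum>i<n. (if V i \<le> -\<zeta> then max (v i) 0 else 0) / S)"
    proof (rule sum_mono)
      fix i
      have "ereal (V i) \<le> z \<Longrightarrow> V i \<le> -\<zeta>"
        using zl by (metis ereal_less_eq(3) le_less_trans less_imp_le)
      then show "(if ereal (V i) \<le> z then v i / S else 0) \<le> (if V i \<le> -\<zeta> then max (v i) 0 else 0) / S"
        using S0 by (auto simp: divide_right_mono)
    qed
    also have "\<dots> = (\<Sum>i<n. if V i \<le> -\<zeta> then max (v i) 0 else 0) / S"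
      by (simp add: sum_divide_distrib)
    also have "\<dots> < b * (\<Sum>i<n. v i) / S"
      using T S0 by (simp add: divide_strict_right_mono)
    also have "\<dots> \<le> b"
      using S0 sv v0 b by (simp add: S_def divide_le_eq)
    finally show False using bz by simp
  qed
qed

text \<open>The infimum defining the weighted quantile is attained at one of the atoms.\<close>

lemma le_wquantile_iff:
  assumes b: "0 < b"
  shows "c \<le> wquantile b n v V v0 \<longleftrightarrow>
    (\<forall>z\<in>insert \<infinity> ((\<lambda>i. ereal (V i)) ` {..<n}). b \<le> wcdf n v V v0 z \<longrightarrow> c \<le> z)"
proof
  assume "c \<le> wquantile b n v V v0"
  then show "\<forall>z\<in>insert \<infinity> ((\<lambda>i. ereal (V i)) ` {..<n}). b \<le> wcdf n v V v0 z \<longrightarrow> c \<le> z"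
    unfolding wquantile_def by (auto intro: order_trans Inf_lower)
next
  assume H: "\<forall>z\<in>insert \<infinity> ((\<lambda>i. ereal (V i)) ` {..<n}). b \<le> wcdf n v V v0 z \<longrightarrow> c \<le> z"
  show "c \<le> wquantile b n v V v0"
    unfolding wquantile_def
  proof (rule Inf_greatest)
    fix z assume "z \<in> {z. b \<le> wcdf n v V v0 z}"
    then have bz: "b \<le> wcdf n v V v0 z" by simp
    show "c \<le> z"
    proof (cases "z = \<infinity>")
      case True then show ?thesis using H bz by auto
    next
      case False
      define J where "J = {i\<in>{..<n}. ereal (V i) \<le> z}"
      have fJ: "finite J" by (simp add: J_def)
      have w: "wcdf n v V v0 z = (\<Sum>i<n. if ereal (V i) \<le> z then v i / ((\<Sum>i<n. v i) + v0) else 0)"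
        using False by (simp add: wcdf_def Let_def)
      show ?thesis
      proof (cases "J = {}")
        case True
        then have "wcdf n v V v0 z = 0" unfolding w J_def by (intro sum.neutral) auto
        then show ?thesis using bz b by simp
      next
        case False
        define m where "m = Max (V ` J)"
        have "m \<in> V ` J" unfolding m_def using fJ False by (intro Max_in) auto
        then obtain j where j: "j \<in> J" "m = V j" by auto
        have mz: "ereal m \<le> z" using j by (simp add: J_def)
        have eqv: "V i \<le> m \<longleftrightarrow> ereal (V i) \<le> z" if "i < n" for i
        proof
          assume "V i \<le> m"
          then show "ereal (V i) \<le> z" using mz by (meson ereal_less_eq(3) order_trans)
        next
          assume "ereal (V i) \<le> z"
          then show "V i \<le> m" unfolding m_def using fJ that by (intro Max_ge) (auto simp: J_def)
        qed
        have "wcdf n v V v0 (ereal m) = wcdf n v V v0 z"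
          unfolding w by (simp add: wcdf_def Let_def) (intro sum.cong refl, simp add: eqv)
        moreover have "ereal m \<in> insert \<infinity> ((\<lambda>i. ereal (V i)) ` {..<n})"
          using j by (auto simp: J_def)
        ultimately have "c \<le> ereal m" using H bz by auto
        then show ?thesis using mz by (rule order_trans)
      qed
    qed
  qed
qed

lemma sets_conformal_set:
  assumes "0 < 1 - \<alpha>"
    and [measurable]: "(\<lambda>y. vw x y) \<in> borel_measurable borel" "(\<lambda>y. s x y) \<in> borel_measurable borel"
  shows "conformal_set \<alpha> n Z vw s x \<in> sets borel"
proof -
  have [measurable]: "(\<lambda>y. wcdf n v V (vw x y) z) \<in> borel_measurable borel" for v V z
    unfolding wcdf_def Let_def by measurable
  show ?thesis
    unfolding conformal_set_def le_wquantile_iff[OF assms(1)] by measurable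
qed

text \<open>The deterministic core of the coverage argument; v and U are the estimated and the true
  weights of the calibration points.\<close>

lemma weight_share_lt:
  fixes v U :: "nat \<Rightarrow> real" and P :: "nat \<Rightarrow> bool"
  assumes U0: "\<And>i. 0 \<le> U i" and n: "n > 0" and e: "0 < \<epsilon>" "3 * \<epsilon> < 1"
    and alpha: "0 < \<alpha>" "\<alpha> < 1"
    and err: "(\<Sum>i<n. \<bar>v i - U i\<bar>) < real n * \<epsilon>"
    and trunc: "real n * (1 - 2 * \<epsilon>) < (\<Sum>i<n. min (U i) K)"
    and tail: "(\<Sum>i<n. max (U i - K) 0) < real n * \<epsilon>"
    and mass: "(\<Sum>i<n. if P i then min (U i) K else 0) < real n * (1 - \<alpha> - 8 * \<epsilon>)"
  shows "0 < (\<Sum>i<n. v i)"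
    and "(\<Sum>i<n. if P i then max (v i) 0 else 0) < (1 - \<alpha>) * (\<Sum>i<n. v i)"
proof -
  have "(\<Sum>i<n. if P i then max (v i) 0 else 0)
      \<le> (\<Sum>i<n. (if P i then min (U i) K else 0) + max (U i - K) 0 + \<bar>v i - U i\<bar>)"
    using U0 by (intro sum_mono) (auto simp: min_def max_def abs_if)
  also have "\<dots> < real n * (1 - \<alpha> - 6 * \<epsilon>)"
    using err tail mass by (simp add: sum.distrib algebra_simps)
  finally have T: "(\<Sum>i<n. if P i then max (v i) 0 else 0) < real n * (1 - \<alpha> - 6 * \<epsilon>)" .
  have "(\<Sum>i<n. min (U i) K - \<bar>v i - U i\<bar>) \<le> (\<Sum>i<n. v i)"
    by (rule sum_mono) (auto simp: min_def abs_if)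
  then have sv: "real n * (1 - 3 * \<epsilon>) < (\<Sum>i<n. v i)"
    using err trunc by (simp add: sum_subtractf algebra_simps)
  show "0 < (\<Sum>i<n. v i)"
    using sv e n by (smt (verit) mult_pos_pos of_nat_0_less_iff)
  have "1 - \<alpha> - 6 * \<epsilon> \<le> (1 - \<alpha>) * (1 - 3 * \<epsilon>)"
    using alpha e by (simp add: algebra_simps)
  then have "real n * (1 - \<alpha> - 6 * \<epsilon>) \<le> (1 - \<alpha>) * (real n * (1 - 3 * \<epsilon>))"
    by (metis mult.left_commute mult_left_mono of_nat_0_le_iff)
  also have "\<dots> < (1 - \<alpha>) * (\<Sum>i<n. v i)"
    using sv alpha by (intro mult_strict_left_mono) auto
  finally show "(\<Sum>i<n. if P i then max (v i) 0 else 0) < (1 - \<alpha>) * (\<Sum>i<n. v i)"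
    using T by linarith
qed

lemma indep_vars_PiM_coordinates:
  assumes P: "prob_space P" and I: "I \<noteq> {}" "finite I"
  shows "prob_space.indep_vars (PiM I (\<lambda>_. P)) (\<lambda>_. P) (\<lambda>i Z. Z i) I"
proof -
  interpret prob_space "PiM I (\<lambda>_. P)" by (rule prob_space_PiM) (use P in auto)
  show ?thesis
  proof (subst indep_vars_iff_distr_eq_PiM'[OF I(1)])
    show "\<And>i. i \<in> I \<Longrightarrow> random_variable P (\<lambda>Z. Z i)" by measurable
    have "distr (PiM I (\<lambda>_. P)) (PiM I (\<lambda>_. P)) (\<lambda>x. \<lambda>i\<in>I. x i) = distr (PiM I (\<lambda>_. P)) (PiM I (\<lambda>_. P)) (\<lambda>x. x)"
      by (intro distr_cong) (auto simp: space_PiM)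
    also have "\<dots> = PiM I (\<lambda>i. distr (PiM I (\<lambda>_. P)) P (\<lambda>Z. Z i))"
      by (simp, intro PiM_cong refl, subst distr_PiM_component) (use P in auto)
    finally show "distr (PiM I (\<lambda>_. P)) (PiM I (\<lambda>_. P)) (\<lambda>x. \<lambda>i\<in>I. x i) = PiM I (\<lambda>i. distr (PiM I (\<lambda>_. P)) P (\<lambda>Z. Z i))" .
  qed
qed

lemma Hoeffding_PiM:
  fixes g :: "'b \<Rightarrow> real"
  assumes P: "prob_space P" and g[measurable]: "g \<in> borel_measurable P"
    and gb: "\<And>z. z \<in> space P \<Longrightarrow> 0 \<le> g z \<and> g z \<le> K" and K: "K > 0" and n: "n > 0" and e: "\<epsilon> \<ge> 0"
  shows "emeasure (PiM {..<n} (\<lambda>_. P)) {Z \<in> space (PiM {..<n} (\<lambda>_. P)). real n * (\<integral>z. g z \<partial>P) + real n * \<epsilon> \<le> (\<Sum>i<n. g (Z i))}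
           \<le> ennreal (exp (- 2 * real n * \<epsilon>\<^sup>2 / K\<^sup>2))"
    and "emeasure (PiM {..<n} (\<lambda>_. P)) {Z \<in> space (PiM {..<n} (\<lambda>_. P)). (\<Sum>i<n. g (Z i)) \<le> real n * (\<integral>z. g z \<partial>P) - real n * \<epsilon>}
           \<le> ennreal (exp (- 2 * real n * \<epsilon>\<^sup>2 / K\<^sup>2))"
proof -
  let ?M = "PiM {..<n} (\<lambda>_. P)"
  interpret prob_space ?M by (rule prob_space_PiM) (use P in auto)
  have ne: "{..<n} \<noteq> {}" using n by auto
  have ind: "indep_vars (\<lambda>_. borel) (\<lambda>i Z. g (Z i)) {..<n}"
    using indep_vars_compose2[OF indep_vars_PiM_coordinates[OF P ne], of "\<lambda>_. g" "\<lambda>_. borel"] by simp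
  have "expectation (\<lambda>Z. g (Z i)) = (\<integral>z. g z \<partial>P)" if "i < n" for i
  proof -
    have "expectation (\<lambda>Z. g (Z i)) = (\<integral>z. g z \<partial>distr ?M P (\<lambda>Z. Z i))"
      by (subst integral_distr) (use that in auto)
    also have "distr ?M P (\<lambda>Z. Z i) = P" by (rule distr_PiM_component) (use P that in auto)
    finally show ?thesis .
  qed
  then have sumE: "(\<Sum>i<n. expectation (\<lambda>Z. g (Z i))) = real n * (\<integral>z. g z \<partial>P)"
    by simp
  interpret Hoeffding_ineq ?M "{..<n}" "\<lambda>i Z. g (Z i)" "\<lambda>_. 0" "\<lambda>_. K" "real n * (\<integral>z. g z \<partial>P)"
  proof (unfold_locales)
    show "\<And>i. i \<in> {..<n} \<Longrightarrow> AE x in ?M. g (x i) \<in> {0..K}"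
      using gb by (intro AE_I2) (auto simp: space_PiM PiE_iff)
  qed (use ind sumE in simp_all)
  have pos: "(\<Sum>i<n. (K - 0)\<^sup>2) > 0" using K n by simp
  have eq: "exp (- 2 * (real n * \<epsilon>)\<^sup>2 / (\<Sum>i<n. (K - 0)\<^sup>2)) = exp (- 2 * real n * \<epsilon>\<^sup>2 / K\<^sup>2)"
    using n K by (simp add: power2_eq_square field_simps)
  have e': "real n * \<epsilon> \<ge> 0" using e by simp
  show "emeasure ?M {Z \<in> space ?M. real n * (\<integral>z. g z \<partial>P) + real n * \<epsilon> \<le> (\<Sum>i<n. g (Z i))}
           \<le> ennreal (exp (- 2 * real n * \<epsilon>\<^sup>2 / K\<^sup>2))"
    using Hoeffding_ineq_ge[OF e' pos] unfolding eq by (simp add: emeasure_eq_measure ennreal_leI)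
  show "emeasure ?M {Z \<in> space ?M. (\<Sum>i<n. g (Z i)) \<le> real n * (\<integral>z. g z \<partial>P) - real n * \<epsilon>}
           \<le> ennreal (exp (- 2 * real n * \<epsilon>\<^sup>2 / K\<^sup>2))"
    using Hoeffding_ineq_le[OF e' pos] unfolding eq by (simp add: emeasure_eq_measure ennreal_leI)
qed

lemma nn_integral_pair_measure_fst:
  assumes "prob_space B" and f: "f \<in> borel_measurable A"
  shows "(\<integral>\<^sup>+\<omega>. f (fst \<omega>) \<partial>(A \<Otimes>\<^sub>M B)) = (\<integral>\<^sup>+x. f x \<partial>A)"
proof -
  interpret B: prob_space B by fact
  have "(\<integral>\<^sup>+\<omega>. f (fst \<omega>) \<partial>(A \<Otimes>\<^sub>M B)) = (\<integral>\<^sup>+x. \<integral>\<^sup>+y. f (fst (x, y)) \<partial>B \<partial>A)"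
    using f by (intro B.nn_integral_fst[symmetric]) (simp add: measurable_compose[OF measurable_fst f])
  then show ?thesis
    by (simp add: B.emeasure_space_1)
qed

lemma nn_integral_pair_measure_snd:
  assumes "prob_space A" "prob_space B" and f: "f \<in> borel_measurable B"
  shows "(\<integral>\<^sup>+\<omega>. f (snd \<omega>) \<partial>(A \<Otimes>\<^sub>M B)) = (\<integral>\<^sup>+x. f x \<partial>B)"
proof -
  interpret A: prob_space A by fact
  interpret B: prob_space B by fact
  interpret AB: pair_sigma_finite A B ..
  have "(\<integral>\<^sup>+\<omega>. f (snd \<omega>) \<partial>(A \<Otimes>\<^sub>M B)) = (\<integral>\<^sup>+y. \<integral>\<^sup>+x. f (snd (x, y)) \<partial>A \<partial>B)"
    using f by (intro AB.nn_integral_snd[symmetric]) (simp add: measurable_compose[OF measurable_snd f])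
  then show ?thesis
    by (simp add: A.emeasure_space_1)
qed

lemma nn_integral_pair_measure_drop_middle:
  assumes A: "prob_space A" and B: "prob_space B" and C: "prob_space C"
    and F: "F \<in> borel_measurable (A \<Otimes>\<^sub>M C)"
  shows "(\<integral>\<^sup>+\<omega>. F (fst (fst \<omega>), snd \<omega>) \<partial>((A \<Otimes>\<^sub>M B) \<Otimes>\<^sub>M C)) = integral\<^sup>N (A \<Otimes>\<^sub>M C) F"
proof -
  interpret C: prob_space C by (rule C)
  have "(\<integral>\<^sup>+\<omega>. F (fst (fst \<omega>), snd \<omega>) \<partial>((A \<Otimes>\<^sub>M B) \<Otimes>\<^sub>M C))
      = (\<integral>\<^sup>+u. \<integral>\<^sup>+x. F (fst (fst (u, x)), snd (u, x)) \<partial>C \<partial>(A \<Otimes>\<^sub>M B))"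
    using F by (intro C.nn_integral_fst[symmetric] measurable_compose[OF _ F]) measurable
  also have "\<dots> = (\<integral>\<^sup>+u. (\<lambda>a. \<integral>\<^sup>+x. F (a, x) \<partial>C) (fst u) \<partial>(A \<Otimes>\<^sub>M B))" by simp
  also have "\<dots> = (\<integral>\<^sup>+a. \<integral>\<^sup>+x. F (a, x) \<partial>C \<partial>A)"
    by (rule nn_integral_pair_measure_fst[OF B C.borel_measurable_nn_integral_fst[OF F]])
  also have "\<dots> = integral\<^sup>N (A \<Otimes>\<^sub>M C) F"
    by (rule C.nn_integral_fst[OF F])
  finally show ?thesis .
qed

lemma nn_integral_PiM_component:
  assumes "prob_space P" and "i < n" and "f \<in> borel_measurable P"
  shows "(\<integral>\<^sup>+Z. f (Z i) \<partial>PiM {..<n} (\<lambda>_. P)) = (\<integral>\<^sup>+z. f z \<partial>P)"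
proof -
  have "(\<integral>\<^sup>+Z. f (Z i) \<partial>PiM {..<n} (\<lambda>_. P)) = (\<integral>\<^sup>+z. f z \<partial>distr (PiM {..<n} (\<lambda>_. P)) P (\<lambda>Z. Z i))"
    using assms by (subst nn_integral_distr) auto
  also have "distr (PiM {..<n} (\<lambda>_. P)) P (\<lambda>Z. Z i) = P"
    by (rule distr_PiM_component) (use assms in auto)
  finally show ?thesis .
qed

lemma less_ennreal_of_mult_inverse_less_1:
  assumes "c > 0" and "a * ennreal (1 / c) < 1"
  shows "a < ennreal c"
proof (rule ccontr)
  assume "\<not> a < ennreal c"
  then have "ennreal c * ennreal (1 / c) \<le> a * ennreal (1 / c)" by (intro mult_right_mono) simp_all
  moreover have "ennreal c * ennreal (1 / c) = 1" using assms(1) by (simp add: ennreal_mult[symmetric])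
  ultimately show False using assms(2) by simp
qed

lemma ennreal_mult_inverse_le:
  assumes "X \<le> ennreal (c * q)" "q > 0" "c \<ge> 0"
  shows "X * ennreal (1 / q) \<le> ennreal c"
proof -
  have "X * ennreal (1 / q) \<le> ennreal (c * q) * ennreal (1 / q)" using assms(1) by (rule mult_right_mono) simp
  also have "\<dots> = ennreal c" using assms by (simp flip: ennreal_mult)
  finally show ?thesis .
qed

lemma eventually_exp_neg_less:
  assumes "c > 0" and "g > 0"
  shows "eventually (\<lambda>n. exp (- 2 * real n * c) < g) sequentially"
proof -
  have "filterlim (\<lambda>n. - ((2 * c) * real n)) at_bot sequentially"
    using filterlim_tendsto_pos_mult_at_top[OF tendsto_const _ filterlim_real_sequentially, of "2 * c"] assms(1)
    by (simp add: filterlim_uminus_at_bot)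
  then have "((\<lambda>n. exp (- 2 * real n * c)) \<longlongrightarrow> 0) sequentially"
    by (auto intro: filterlim_compose[OF exp_at_bot] simp: mult_ac)
  then show ?thesis using order_tendstoD(2) assms(2) by blast
qed

lemma ennreal_of_nat_mult_inverse:
  assumes "n > 0" and "c > 0"
  shows "of_nat n * X * ennreal (1 / (real n * c)) = X * ennreal (1 / c)"
proof -
  have "ennreal (real n * (1 / (real n * c))) = ennreal (real n) * ennreal (1 / (real n * c))"
    by (rule ennreal_mult) (use assms in auto)
  then have "of_nat n * ennreal (1 / (real n * c)) = ennreal (real n * (1 / (real n * c)))"
    by (simp add: ennreal_of_nat_eq_real_of_nat)
  also have "\<dots> = ennreal (1 / c)" using assms by simp
  finally show ?thesis by (metis mult.assoc mult.commute)
qed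

lemma ennreal_risk_terms_le:
  fixes Q W :: ennreal
  assumes \<gamma>: "0 < \<gamma>" and pos: "0 < \<epsilon>" "0 < \<delta>" "0 < c" "0 < s"
    and Q: "Q < ennreal (\<gamma> / 8 * \<delta>)" "W < ennreal (\<gamma> / 8 * \<epsilon>)" "Q < ennreal (\<gamma> / 8 * c)" "W < ennreal (\<gamma> / 8 * s)"
    and E: "E < \<gamma> / 8" and T: "T \<le> \<gamma> / 4 * \<epsilon>"
  shows "Q * ennreal (1 / \<delta>) + W * ennreal (1 / \<epsilon>) + ennreal E + ennreal T * ennreal (1 / \<epsilon>)
      + ennreal E + Q * ennreal (1 / c) + W * ennreal (1 / s) \<le> ennreal \<gamma>"
proof -
  have g: "0 \<le> \<gamma> / 8" "0 \<le> \<gamma> / 4" using \<gamma> by simp_all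
  have "Q * ennreal (1 / \<delta>) + W * ennreal (1 / \<epsilon>) + ennreal E + ennreal T * ennreal (1 / \<epsilon>)
      + ennreal E + Q * ennreal (1 / c) + W * ennreal (1 / s)
    \<le> ennreal (\<gamma> / 8) + ennreal (\<gamma> / 8) + ennreal (\<gamma> / 8) + ennreal (\<gamma> / 4)
      + ennreal (\<gamma> / 8) + ennreal (\<gamma> / 8) + ennreal (\<gamma> / 8)"
    using ennreal_mult_inverse_le[OF less_imp_le[OF Q(1)] pos(2) g(1)]
      ennreal_mult_inverse_le[OF less_imp_le[OF Q(2)] pos(1) g(1)]
      ennreal_mult_inverse_le[OF ennreal_leI[OF T] pos(1) g(2)]
      ennreal_mult_inverse_le[OF less_imp_le[OF Q(3)] pos(3) g(1)]
      ennreal_mult_inverse_le[OF less_imp_le[OF Q(4)] pos(4) g(1)]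
      ennreal_leI[OF less_imp_le[OF E]]
    by (intro add_mono) auto
  also have "\<dots> = ennreal \<gamma>"
    using \<gamma> by (simp add: ennreal_plus[symmetric] del: ennreal_plus)
  finally show ?thesis .
qed

locale off_policy =
  fixes PX :: "'x measure" and Act :: "'a measure"
    and pib pis :: "'x \<Rightarrow> 'a measure"
    and Pout :: "'x \<times> 'a \<Rightarrow> real measure"
    and p :: "'x \<Rightarrow> real \<Rightarrow> real"
    and \<alpha> \<alpha>lo \<alpha>hi :: real
    and Pb Ps :: "('x \<times> real) measure"
  assumes Pb_def: "Pb = joint_law PX pib Pout"
    and Ps_def: "Ps = joint_law PX pis Pout"
    and PX: "prob_space PX"
    and pib: "pib \<in> PX \<rightarrow>\<^sub>M prob_algebra Act"
    and pis: "pis \<in> PX \<rightarrow>\<^sub>M prob_algebra Act"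
    and Pout: "Pout \<in> PX \<Otimes>\<^sub>M Act \<rightarrow>\<^sub>M prob_algebra borel"
    and dens: "\<forall>x\<in>space PX. cond_law pis Pout x = density lborel (p x)"
    and p_meas: "(\<lambda>(x, y). p x y) \<in> borel_measurable (PX \<Otimes>\<^sub>M borel)"
    and abs_cont: "absolutely_continuous Pb Ps"
    and alpha: "0 < \<alpha>" "\<alpha> < 1" "0 < \<alpha>lo" "\<alpha>lo < \<alpha>hi" "\<alpha>hi < 1" "\<alpha>hi - \<alpha>lo = 1 - \<alpha>"
begin

sublocale PX: prob_space PX by (rule PX)

lemma sets_Pb[measurable_cong]: "sets Pb = sets (PX \<Otimes>\<^sub>M borel)"
  using sets_joint_law[OF PX pib Pout] by (simp add: Pb_def)

lemma sets_Ps[measurable_cong]: "sets Ps = sets (PX \<Otimes>\<^sub>M borel)"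
  using sets_joint_law[OF PX pis Pout] by (simp add: Ps_def)

lemma space_Pb: "space Pb = space (PX \<Otimes>\<^sub>M borel)"
  using sets_Pb by (rule sets_eq_imp_space_eq)

lemma prob_space_Pb: "prob_space Pb"
  using prob_space_joint_law[OF PX pib Pout] by (simp add: Pb_def)

sublocale Pb: prob_space Pb by (rule prob_space_Pb)
sublocale Ps: prob_space Ps using prob_space_joint_law[OF PX pis Pout] by (simp add: Ps_def)

abbreviation Pstar :: "'x \<Rightarrow> real measure" where
  "Pstar \<equiv> cond_law pis Pout"

lemma Pstar_measurable[measurable]: "Pstar \<in> PX \<rightarrow>\<^sub>M prob_algebra borel"
  by (rule cond_law_measurable[OF pis Pout])

lemma real_distribution_Pstar: "x \<in> space PX \<Longrightarrow> real_distribution (Pstar x)"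
  by (rule real_distribution_cond_law[OF pis Pout])

lemma emeasure_Ps: "A \<in> sets (PX \<Otimes>\<^sub>M borel) \<Longrightarrow> emeasure Ps A = (\<integral>\<^sup>+x. emeasure (Pstar x) (Pair x -` A) \<partial>PX)"
  unfolding Ps_def by (rule emeasure_joint_law[OF PX pis Pout])

text \<open>The importance weight; enn2real sends the null set where the density is infinite to 0.\<close>

definition w :: "'x \<times> real \<Rightarrow> real" where
  "w xy = enn2real (RN_deriv Pb Ps xy)"

lemma w_measurable[measurable]: "w \<in> borel_measurable (PX \<Otimes>\<^sub>M borel)"
  unfolding w_def by (simp flip: measurable_cong_sets[OF sets_Pb refl])

lemma w_nonneg: "0 \<le> w xy"
  by (simp add: w_def)

lemma Ps_eq_density_w: "Ps = density Pb (\<lambda>xy. ennreal (w xy))"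
proof -
  have "AE x in Pb. RN_deriv Pb Ps x \<noteq> \<infinity>"
    using Pb.RN_deriv_finite[OF Ps.sigma_finite_measure_axioms abs_cont] sets_Ps sets_Pb by simp
  then have "density Pb (\<lambda>xy. ennreal (w xy)) = density Pb (RN_deriv Pb Ps)"
    by (intro density_cong) (auto simp: w_def ennreal_enn2real_if elim!: AE_mp)
  also have "\<dots> = Ps" using Pb.density_RN_deriv[OF abs_cont] sets_Ps sets_Pb by simp
  finally show ?thesis by simp
qed

lemma emeasure_Ps_eq_nn_integral_w:
  "A \<in> sets (PX \<Otimes>\<^sub>M borel) \<Longrightarrow> emeasure Ps A = (\<integral>\<^sup>+xy. ennreal (w xy) * indicator A xy \<partial>Pb)"
  by (subst Ps_eq_density_w) (simp add: emeasure_density sets_Pb)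

lemma nn_integral_w: "(\<integral>\<^sup>+xy. ennreal (w xy) \<partial>Pb) = 1"
proof -
  have "1 = emeasure Ps (space (PX \<Otimes>\<^sub>M borel))"
    using Ps.emeasure_space_1 sets_eq_imp_space_eq[OF sets_Ps] by simp
  also have "\<dots> = (\<integral>\<^sup>+xy. ennreal (w xy) * indicator (space Pb) xy \<partial>Pb)"
    by (simp add: emeasure_Ps_eq_nn_integral_w space_Pb)
  also have "\<dots> = (\<integral>\<^sup>+xy. ennreal (w xy) \<partial>Pb)"
    by (rule nn_integral_cong) simp
  finally show ?thesis by simp
qed

lemma integrable_w: "integrable Pb w"
  using nn_integral_w by (intro integrableI_nn_integral_finite[where x=1]) (auto simp: w_nonneg)

lemma integral_w: "(\<integral>z. w z \<partial>Pb) = 1"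
  using nn_integral_w by (subst integral_eq_nn_integral) (auto simp: w_nonneg)

lemma exists_small_weight_tail:
  assumes "\<eta> > 0"
  shows "\<exists>K>0. (\<integral>z. max (w z - K) 0 \<partial>Pb) \<le> \<eta>"
proof -
  have "(\<lambda>j. \<integral>z. max (w z - real j) 0 \<partial>Pb) \<longlonglongrightarrow> (\<integral>z. 0 \<partial>Pb)"
  proof (rule integral_dominated_convergence[where w=w])
    show "AE z in Pb. (\<lambda>j. max (w z - real j) 0) \<longlonglongrightarrow> 0"
    proof (rule AE_I2)
      fix z
      obtain N :: nat where "w z \<le> real N" using real_arch_simple by blast
      then have "\<forall>j\<ge>N. max (w z - real j) 0 = 0" by auto
      then show "(\<lambda>j. max (w z - real j) 0) \<longlonglongrightarrow> 0"
        by (intro tendsto_eventually) (auto simp: eventually_sequentially)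
    qed
  qed (use integrable_w w_nonneg in auto)
  from order_tendstoD(2)[OF this[simplified] assms]
  obtain N where N: "\<And>j. j \<ge> N \<Longrightarrow> (\<integral>z. max (w z - real j) 0 \<partial>Pb) < \<eta>"
    by (auto simp: eventually_sequentially)
  show ?thesis
    using N[of "Suc N"] by (intro exI[of _ "real (Suc N)"]) auto
qed

lemma integral_min_w:
  assumes "0 \<le> K"
  shows "(\<integral>z. min (w z) K \<partial>Pb) = 1 - (\<integral>z. max (w z - K) 0 \<partial>Pb)"
proof -
  have "integrable Pb (\<lambda>z. max (w z - K) 0)"
    by (rule Bochner_Integration.integrable_bound[OF integrable_w]) (use assms w_nonneg in auto)
  then have "(\<integral>z. w z - max (w z - K) 0 \<partial>Pb) = 1 - (\<integral>z. max (w z - K) 0 \<partial>Pb)"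
    by (simp add: integrable_w integral_w)
  moreover have "(\<lambda>z. w z - max (w z - K) 0) = (\<lambda>z. min (w z) K)"
    by auto
  ultimately show ?thesis by simp
qed

definition qlo :: "'x \<Rightarrow> real" where "qlo x = quantile_of \<alpha>lo (Pstar x)"
definition qhi :: "'x \<Rightarrow> real" where "qhi x = quantile_of \<alpha>hi (Pstar x)"

lemma quantile_of_Pstar_measurable:
  assumes "0 < \<beta>" "\<beta> < 1"
  shows "(\<lambda>x. quantile_of \<beta> (Pstar x)) \<in> borel_measurable PX"
proof -
  have "{x \<in> space PX. quantile_of \<beta> (Pstar x) \<le> c} = {x \<in> space PX. \<beta> \<le> measure (Pstar x) {..c}}" for c
    using real_distribution.quantile_of_le_iff[OF real_distribution_Pstar assms] by (auto simp: cdf_def)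
  moreover have "{x \<in> space PX. \<beta> \<le> measure (Pstar x) {..c}} \<in> sets PX" for c
    by measurable
  ultimately show ?thesis by (subst borel_measurable_iff_le) simp
qed

lemma qlo_measurable[measurable]: "qlo \<in> borel_measurable PX"
  using quantile_of_Pstar_measurable[of \<alpha>lo] alpha unfolding qlo_def[abs_def] by simp

lemma qhi_measurable[measurable]: "qhi \<in> borel_measurable PX"
  using quantile_of_Pstar_measurable[of \<alpha>hi] alpha unfolding qhi_def[abs_def] by simp

end

locale off_policy_local_density = off_policy +
  fixes r b1 b2 :: real
  assumes r: "r > 0" and b1: "b1 > 0" and b2: "b2 > 0"
    and A2: "\<forall>x\<in>space PX. \<forall>y.
                 (\<bar>y - quantile_of \<alpha>lo (cond_law pis Pout x)\<bar> \<le> r \<or>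
                  \<bar>y - quantile_of \<alpha>hi (cond_law pis Pout x)\<bar> \<le> r)
                 \<longrightarrow> b1 \<le> p x y \<and> p x y \<le> b2"
begin

lemma cdf_near_qlo:
  assumes x: "x \<in> space PX"
  shows "cdf (Pstar x) (qlo x) = \<alpha>lo"
    and "\<And>c. 0 \<le> c \<Longrightarrow> c \<le> r \<Longrightarrow> cdf (Pstar x) (qlo x + c) \<le> \<alpha>lo + b2 * c"
  using real_distribution.cdf_near_quantile[OF real_distribution_Pstar[OF x], of \<alpha>lo "p x" r b1 b2]
    alpha dens x measurable_Pair2[OF p_meas x] r b1 b2 A2 unfolding qlo_def by auto

lemma cdf_near_qhi:
  assumes x: "x \<in> space PX"
  shows "\<And>c. 0 \<le> c \<Longrightarrow> c \<le> r \<Longrightarrow> \<alpha>hi - b2 * c \<le> cdf (Pstar x) (qhi x - c)"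
    and "\<And>c. 0 \<le> c \<Longrightarrow> c \<le> r \<Longrightarrow> cdf (Pstar x) (qhi x - c) \<le> \<alpha>hi - b1 * c"
  using real_distribution.cdf_near_quantile[OF real_distribution_Pstar[OF x], of \<alpha>hi "p x" r b1 b2]
    alpha dens x measurable_Pair2[OF p_meas x] r b1 b2 A2 unfolding qhi_def by auto

lemma measure_band_ge:
  assumes x: "x \<in> space PX" and z: "0 < \<zeta>"
    and h: "\<bar>lo - qlo x\<bar> \<le> h" "\<bar>hi - qhi x\<bar> \<le> h" and hr: "h + \<zeta> \<le> r"
  shows "1 - \<alpha> - 2 * b2 * (h + \<zeta>) \<le> measure (Pstar x) {y. lo + \<zeta> \<le> y \<and> y \<le> hi - \<zeta>}"
proof -
  interpret real_distribution "Pstar x" by (rule real_distribution_Pstar[OF x])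
  define c where "c = h + \<zeta>"
  have c0: "0 \<le> c" "c \<le> r" using h z hr by (auto simp: c_def)
  have "cdf (Pstar x) (qhi x - c) - cdf (Pstar x) (qlo x + c) \<le> measure (Pstar x) {qlo x + c<..qhi x - c}"
    by (rule cdf_diff_le_measure_Ioc)
  also have "\<dots> \<le> measure (Pstar x) {y. lo + \<zeta> \<le> y \<and> y \<le> hi - \<zeta>}"
    using h by (intro finite_measure_mono) (auto simp: c_def abs_le_iff)
  finally show ?thesis
    using cdf_near_qlo(2)[OF x c0] cdf_near_qhi(1)[OF x c0] cdf_near_qlo(1)[OF x] alpha
    by (simp add: c_def algebra_simps)
qed

lemma measure_band_le:
  assumes x: "x \<in> space PX" and z: "0 < \<zeta>" "\<zeta> \<le> 2 * r" "b1 * \<zeta> \<le> 2 * (1 - \<alpha>)"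
    and h: "\<bar>lo - qlo x\<bar> \<le> \<zeta> / 2" "\<bar>hi - qhi x\<bar> \<le> \<zeta> / 2"
  shows "measure (Pstar x) {y. lo + \<zeta> \<le> y \<and> y \<le> hi - \<zeta>} \<le> 1 - \<alpha> - b1 * \<zeta> / 2"
proof -
  interpret real_distribution "Pstar x" by (rule real_distribution_Pstar[OF x])
  have "qlo x - \<zeta> / 2 \<le> lo" "hi \<le> qhi x + \<zeta> / 2"
    using h unfolding abs_le_iff by linarith+
  then have "measure (Pstar x) {y. lo + \<zeta> \<le> y \<and> y \<le> hi - \<zeta>} \<le> measure (Pstar x) {qlo x<..qhi x - \<zeta> / 2}"
    using z by (intro finite_measure_mono) auto
  also have "\<dots> \<le> 1 - \<alpha> - b1 * \<zeta> / 2"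
  proof (cases "qlo x \<le> qhi x - \<zeta> / 2")
    case True
    have c: "0 \<le> \<zeta> / 2" "\<zeta> / 2 \<le> r" using z by auto
    show ?thesis using measure_Ioc_eq_cdf_diff[OF True] cdf_near_qlo(1)[OF x] cdf_near_qhi(2)[OF x c] alpha
      by (simp add: algebra_simps)
  next
    case False
    then show ?thesis using z by simp
  qed
  finally show ?thesis .
qed

end

locale off_policy_estimators = off_policy_local_density +
  fixes qlo_hat qhi_hat :: "nat \<Rightarrow> _ \<Rightarrow> _ \<Rightarrow> real" and w_hat :: "nat \<Rightarrow> _ \<Rightarrow> _ \<Rightarrow> real \<Rightarrow> real"
  assumes qlo_hat_meas: "\<forall>m. (\<lambda>(D, x). qlo_hat m D x) \<in> borel_measurable (PiM {..<m} (\<lambda>_. Pb) \<Otimes>\<^sub>M PX)"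
    and qhi_hat_meas: "\<forall>m. (\<lambda>(D, x). qhi_hat m D x) \<in> borel_measurable (PiM {..<m} (\<lambda>_. Pb) \<Otimes>\<^sub>M PX)"
    and w_hat_meas: "\<forall>m. (\<lambda>(D, xy). w_hat m D (fst xy) (snd xy)) \<in> borel_measurable (PiM {..<m} (\<lambda>_. Pb) \<Otimes>\<^sub>M Pb)"
begin

abbreviation sample where
  "sample m \<equiv> PiM {..<m} (\<lambda>_. Pb)"

lemma prob_space_sample: "prob_space (sample m)"
  by (rule prob_space_PiM) (rule prob_space_Pb)

definition score where
  "score m D x y = max (y - qhi_hat m D x) (qlo_hat m D x - y)"

definition qerr where
  "qerr m D x = max \<bar>qlo_hat m D x - qlo x\<bar> \<bar>qhi_hat m D x - qhi x\<bar>"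

lemma score_le_iff: "score m D x y \<le> -\<zeta> \<longleftrightarrow> qlo_hat m D x + \<zeta> \<le> y \<and> y \<le> qhi_hat m D x - \<zeta>"
  unfolding score_def by auto

lemma qlo_hat_measurable[measurable]: "(\<lambda>\<omega>. qlo_hat m (fst \<omega>) (snd \<omega>)) \<in> borel_measurable (sample m \<Otimes>\<^sub>M PX)"
  using qlo_hat_meas by (simp add: case_prod_beta')

lemma qhi_hat_measurable[measurable]: "(\<lambda>\<omega>. qhi_hat m (fst \<omega>) (snd \<omega>)) \<in> borel_measurable (sample m \<Otimes>\<^sub>M PX)"
  using qhi_hat_meas by (simp add: case_prod_beta')

lemma w_hat_measurable[measurable]:
  "(\<lambda>\<omega>. w_hat m (fst \<omega>) (fst (snd \<omega>)) (snd (snd \<omega>))) \<in> borel_measurable (sample m \<Otimes>\<^sub>M Pb)"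
  using w_hat_meas by (simp add: case_prod_beta')

lemma qerr_measurable[measurable]: "(\<lambda>\<omega>. qerr m (fst \<omega>) (snd \<omega>)) \<in> borel_measurable (sample m \<Otimes>\<^sub>M PX)"
  unfolding qerr_def by measurable

lemma score_measurable[measurable]:
  "(\<lambda>\<omega>. score m (fst \<omega>) (fst (snd \<omega>)) (snd (snd \<omega>))) \<in> borel_measurable (sample m \<Otimes>\<^sub>M Pb)"
proof -
  have proj: "(\<lambda>\<omega>. (fst \<omega>, fst (snd \<omega>))) \<in> sample m \<Otimes>\<^sub>M Pb \<rightarrow>\<^sub>M sample m \<Otimes>\<^sub>M PX"
    by measurable
  show ?thesis
    using measurable_compose[OF proj qlo_hat_measurable] measurable_compose[OF proj qhi_hat_measurable]
    unfolding score_def by (simp add: comp_def)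
qed

lemma score_section_measurable:
  "D \<in> space (sample m) \<Longrightarrow> (\<lambda>xy. score m D (fst xy) (snd xy)) \<in> borel_measurable (PX \<Otimes>\<^sub>M borel)"
  using measurable_Pair2[OF score_measurable, of D] by (simp add: measurable_cong_sets[OF sets_Pb refl])

lemma w_hat_section_measurable:
  "D \<in> space (sample m) \<Longrightarrow> (\<lambda>xy. w_hat m D (fst xy) (snd xy)) \<in> borel_measurable (PX \<Otimes>\<^sub>M borel)"
  using measurable_Pair2[OF w_hat_measurable, of D] by (simp add: measurable_cong_sets[OF sets_Pb refl])

lemma w_hat_fibre_measurable:
  "D \<in> space (sample m) \<Longrightarrow> x \<in> space PX \<Longrightarrow> w_hat m D x \<in> borel_measurable borel"
  using measurable_Pair2[OF w_hat_section_measurable, of D m x] by simp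

lemma qerr_section_measurable: "D \<in> space (sample m) \<Longrightarrow> qerr m D \<in> borel_measurable PX"
  using measurable_Pair2[OF qerr_measurable, of D] by simp

lemma emeasure_Ps_score_le:
  assumes D: "D \<in> space (sample m)" and z: "0 < \<zeta>" "\<zeta> \<le> 2 * r" "b1 * \<zeta> \<le> 2 * (1 - \<alpha>)"
  shows "emeasure Ps {xy \<in> space (PX \<Otimes>\<^sub>M borel). score m D (fst xy) (snd xy) \<le> -\<zeta>}
     \<le> ennreal (1 - \<alpha> - b1 * \<zeta> / 2) + emeasure PX {x \<in> space PX. \<zeta> / 2 < qerr m D x}"
proof -
  note [measurable] = score_section_measurable[OF D] qerr_section_measurable[OF D]
  define A where "A = {xy \<in> space (PX \<Otimes>\<^sub>M borel). score m D (fst xy) (snd xy) \<le> -\<zeta>}"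
  have A: "A \<in> sets (PX \<Otimes>\<^sub>M borel)" unfolding A_def by measurable
  have "emeasure Ps A = (\<integral>\<^sup>+x. emeasure (Pstar x) (Pair x -` A) \<partial>PX)"
    by (rule emeasure_Ps[OF A])
  also have "\<dots> \<le> (\<integral>\<^sup>+x. ennreal (1 - \<alpha> - b1 * \<zeta> / 2) + indicator {x \<in> space PX. \<zeta> / 2 < qerr m D x} x \<partial>PX)"
  proof (rule nn_integral_mono)
    fix x assume x: "x \<in> space PX"
    interpret real_distribution "Pstar x" by (rule real_distribution_Pstar[OF x])
    show "emeasure (Pstar x) (Pair x -` A) \<le> ennreal (1 - \<alpha> - b1 * \<zeta> / 2) + indicator {x \<in> space PX. \<zeta> / 2 < qerr m D x} x"
    proof (cases "\<zeta> / 2 < qerr m D x")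
      case True
      then show ?thesis using x emeasure_le_1 by (simp add: add_increasing)
    next
      case False
      then have h: "\<bar>qlo_hat m D x - qlo x\<bar> \<le> \<zeta> / 2" "\<bar>qhi_hat m D x - qhi x\<bar> \<le> \<zeta> / 2"
        unfolding qerr_def by (metis max.bounded_iff not_less)+
      have "Pair x -` A = {y. qlo_hat m D x + \<zeta> \<le> y \<and> y \<le> qhi_hat m D x - \<zeta>}"
        using x by (auto simp: A_def space_pair_measure score_le_iff)
      then have "measure (Pstar x) (Pair x -` A) \<le> 1 - \<alpha> - b1 * \<zeta> / 2"
        using measure_band_le[OF x z h] by simp
      then show ?thesis
        by (simp add: emeasure_eq_measure ennreal_leI add_increasing2)
    qed
  qed
  also have "\<dots> = ennreal (1 - \<alpha> - b1 * \<zeta> / 2) + emeasure PX {x \<in> space PX. \<zeta> / 2 < qerr m D x}"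
    by (subst nn_integral_add) (auto simp: PX.emeasure_space_1)
  finally show ?thesis unfolding A_def .
qed

lemma emeasure_Ps_negative_weight_le:
  assumes D: "D \<in> space (sample m)"
  shows "emeasure Ps {xy \<in> space (PX \<Otimes>\<^sub>M borel). w_hat m D (fst xy) (snd xy) < 0}
     \<le> (\<integral>\<^sup>+xy. ennreal \<bar>w_hat m D (fst xy) (snd xy) - w xy\<bar> \<partial>Pb)"
proof -
  note [measurable] = w_hat_section_measurable[OF D]
  define A where "A = {xy \<in> space (PX \<Otimes>\<^sub>M borel). w_hat m D (fst xy) (snd xy) < 0}"
  have "emeasure Ps A = (\<integral>\<^sup>+xy. ennreal (w xy) * indicator A xy \<partial>Pb)"
    by (rule emeasure_Ps_eq_nn_integral_w) (simp add: A_def)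
  also have "\<dots> \<le> (\<integral>\<^sup>+xy. ennreal \<bar>w_hat m D (fst xy) (snd xy) - w xy\<bar> \<partial>Pb)"
    using w_nonneg by (intro nn_integral_mono) (auto simp: A_def indicator_def intro!: ennreal_leI)
  finally show ?thesis unfolding A_def .
qed

lemma coverage_gt_of_good_sample:
  assumes D: "D \<in> space (sample m)" and x: "x \<in> space PX" and n: "n > 0"
    and z: "0 < \<zeta>" "\<zeta> \<le> r / 2" "3 * b2 * \<zeta> \<le> t / 2"
    and e: "0 < \<epsilon>" "3 * \<epsilon> < 1"
    and err: "(\<Sum>i<n. \<bar>w_hat m D (fst (Z i)) (snd (Z i)) - w (Z i)\<bar>) < real n * \<epsilon>"
    and trunc: "real n * (1 - 2 * \<epsilon>) < (\<Sum>i<n. min (w (Z i)) K)"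
    and tail: "(\<Sum>i<n. max (w (Z i) - K) 0) < real n * \<epsilon>"
    and mass: "(\<Sum>i<n. if score m D (fst (Z i)) (snd (Z i)) \<le> -\<zeta> then min (w (Z i)) K else 0)
                 < real n * (1 - \<alpha> - 8 * \<epsilon>)"
    and qerr: "qerr m D x < \<zeta> / 2"
    and neg: "measure (Pstar x) {y. w_hat m D x y < 0} < t / 2"
  shows "1 - \<alpha> - t < measure (Pstar x) (conformal_set \<alpha> n Z (w_hat m D) (score m D) x)"
proof -
  interpret real_distribution "Pstar x" by (rule real_distribution_Pstar[OF x])
  note [measurable] = w_hat_fibre_measurable[OF D x]
  define v where "v i = w_hat m D (fst (Z i)) (snd (Z i))" for i
  define V where "V i = score m D (fst (Z i)) (snd (Z i))" for i
  have "(\<Sum>i<n. \<bar>v i - w (Z i)\<bar>) < real n * \<epsilon>"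
    and "(\<Sum>i<n. if V i \<le> -\<zeta> then min (w (Z i)) K else 0) < real n * (1 - \<alpha> - 8 * \<epsilon>)"
    using err mass by (simp_all add: v_def V_def)
  note share = weight_share_lt[OF w_nonneg n e alpha(1,2) this(1) trunc tail this(2)]
  define C where "C = conformal_set \<alpha> n Z (w_hat m D) (score m D) x"
  define A where "A = {y. qlo_hat m D x + \<zeta> \<le> y \<and> y \<le> qhi_hat m D x - \<zeta>}"
  define B where "B = {y. w_hat m D x y < 0}"
  have C: "C \<in> sets (Pstar x)"
    unfolding C_def using alpha by (simp add: sets_conformal_set score_def)
  have A: "A \<in> sets (Pstar x)" and B: "B \<in> sets (Pstar x)"
    unfolding A_def B_def by simp_all
  have "A - B \<subseteq> C"
  proof
    fix y assume y: "y \<in> A - B"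
    then have w0: "0 \<le> w_hat m D x y"
      by (simp add: B_def)
    from y have "ereal (score m D x y) \<le> ereal (-\<zeta>)"
      by (simp add: A_def score_le_iff)
    also have "ereal (-\<zeta>) \<le> wquantile (1 - \<alpha>) n v V (w_hat m D x y)"
      by (rule wquantile_ge_of_small_mass[OF _ share(1) w0 share(2)]) (use alpha in simp)
    finally show "y \<in> C" unfolding C_def conformal_set_def v_def V_def by simp
  qed
  then have "measure (Pstar x) A - measure (Pstar x) B \<le> measure (Pstar x) C"
    using finite_measure_Diff'[OF A B] finite_measure_mono[OF _ C, of "A - B"]
      finite_measure_mono[OF Int_lower2 B, of A]
    by linarith
  moreover have "1 - \<alpha> - 2 * b2 * (qerr m D x + \<zeta>) \<le> measure (Pstar x) A"
    unfolding A_def by (rule measure_band_ge[OF x z(1)]) (use qerr z r in \<open>auto simp: qerr_def\<close>)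
  moreover have "2 * b2 * (qerr m D x + \<zeta>) \<le> 3 * b2 * \<zeta>"
    using qerr b2 by (simp add: algebra_simps)
  ultimately show ?thesis
    using neg z unfolding B_def C_def by linarith
qed

end

locale off_policy_consistency = off_policy_estimators +
  fixes k t :: real
  assumes k: "k > 0" and t: "t > 0"
    and A1: "(\<lambda>m. \<integral>\<^sup>+ (D, xy). ennreal \<bar>w_hat m D (fst xy) (snd xy) - enn2real (RN_deriv Pb Ps xy)\<bar>
                 \<partial>(PiM {..<m} (\<lambda>_. Pb) \<Otimes>\<^sub>M Pb)) \<longlonglongrightarrow> 0"
    and A3: "(\<lambda>m. \<integral>\<^sup>+ (D, x). ennreal ((max \<bar>qlo_hat m D x - quantile_of \<alpha>lo (cond_law pis Pout x)\<bar>
                                                 \<bar>qhi_hat m D x - quantile_of \<alpha>hi (cond_law pis Pout x)\<bar>) powr k)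
                 \<partial>(PiM {..<m} (\<lambda>_. Pb) \<Otimes>\<^sub>M PX)) \<longlonglongrightarrow> 0"
begin

abbreviation Omega where
  "Omega m n \<equiv> (sample m \<Otimes>\<^sub>M sample n) \<Otimes>\<^sub>M PX"

definition undercoverage where
  "undercoverage m n = {((D, Z), x) \<in> space (Omega m n).
     measure (Pstar x) (conformal_set \<alpha> n Z (w_hat m D) (score m D) x) \<le> 1 - \<alpha> - t}"

definition werr where
  "werr m u = \<bar>w_hat m (fst u) (fst (snd u)) (snd (snd u)) - w (snd u)\<bar>"

definition weight_risk where
  "weight_risk m = (\<integral>\<^sup>+u. ennreal (werr m u) \<partial>(sample m \<Otimes>\<^sub>M Pb))"

definition quantile_risk where
  "quantile_risk m = (\<integral>\<^sup>+u. ennreal (qerr m (fst u) (snd u) powr k) \<partial>(sample m \<Otimes>\<^sub>M PX))"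

lemma weight_risk_tendsto_0: "weight_risk \<longlonglongrightarrow> 0"
proof -
  have "weight_risk = (\<lambda>m. \<integral>\<^sup>+ (D, xy). ennreal \<bar>w_hat m D (fst xy) (snd xy) - enn2real (RN_deriv Pb Ps xy)\<bar>
                 \<partial>(PiM {..<m} (\<lambda>_. Pb) \<Otimes>\<^sub>M Pb))"
    by (auto simp: weight_risk_def werr_def w_def case_prod_beta' fun_eq_iff)
  then show ?thesis using A1 by simp
qed

lemma quantile_risk_tendsto_0: "quantile_risk \<longlonglongrightarrow> 0"
proof -
  have "quantile_risk = (\<lambda>m. \<integral>\<^sup>+ (D, x). ennreal ((max \<bar>qlo_hat m D x - quantile_of \<alpha>lo (cond_law pis Pout x)\<bar>
                                                 \<bar>qhi_hat m D x - quantile_of \<alpha>hi (cond_law pis Pout x)\<bar>) powr k)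
                 \<partial>(PiM {..<m} (\<lambda>_. Pb) \<Otimes>\<^sub>M PX))"
    by (auto simp: quantile_risk_def qerr_def qlo_def qhi_def case_prod_beta' fun_eq_iff)
  then show ?thesis using A3 by simp
qed

lemma werr_measurable[measurable]: "werr m \<in> borel_measurable (sample m \<Otimes>\<^sub>M Pb)"
  unfolding werr_def[abs_def] by measurable

lemma qerr_powr_measurable[measurable]:
  "(\<lambda>u. ennreal (qerr m (fst u) (snd u) powr k)) \<in> borel_measurable (sample m \<Otimes>\<^sub>M PX)"
  by measurable

lemma nn_integral_Omega_train:
  assumes "g \<in> borel_measurable (sample m)"
  shows "(\<integral>\<^sup>+\<omega>. g (fst (fst \<omega>)) \<partial>Omega m n) = (\<integral>\<^sup>+D. g D \<partial>sample m)"
proof -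
  have g: "(\<lambda>u. g (fst u)) \<in> borel_measurable (sample m \<Otimes>\<^sub>M sample n)"
    by (rule measurable_compose[OF measurable_fst assms])
  show ?thesis
    using nn_integral_pair_measure_fst[OF PX g] nn_integral_pair_measure_fst[OF prob_space_sample assms] by simp
qed

lemma nn_integral_Omega_calib:
  assumes "g \<in> borel_measurable (sample n)"
  shows "(\<integral>\<^sup>+\<omega>. g (snd (fst \<omega>)) \<partial>Omega m n) = (\<integral>\<^sup>+Z. g Z \<partial>sample n)"
proof -
  have g: "(\<lambda>u. g (snd u)) \<in> borel_measurable (sample m \<Otimes>\<^sub>M sample n)"
    by (rule measurable_compose[OF measurable_snd assms])
  show ?thesis
    using nn_integral_pair_measure_fst[OF PX g] nn_integral_pair_measure_snd[OF prob_space_sample prob_space_sample assms]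
    by simp
qed

lemma nn_integral_Omega_samples:
  "g \<in> borel_measurable (sample m \<Otimes>\<^sub>M sample n) \<Longrightarrow>
     (\<integral>\<^sup>+\<omega>. g (fst \<omega>) \<partial>Omega m n) = (\<integral>\<^sup>+u. g u \<partial>(sample m \<Otimes>\<^sub>M sample n))"
  by (rule nn_integral_pair_measure_fst[OF PX])

lemma nn_integral_Omega_train_test:
  "g \<in> borel_measurable (sample m \<Otimes>\<^sub>M PX) \<Longrightarrow>
     (\<integral>\<^sup>+\<omega>. g (fst (fst \<omega>), snd \<omega>) \<partial>Omega m n) = (\<integral>\<^sup>+u. g u \<partial>(sample m \<Otimes>\<^sub>M PX))"
  by (rule nn_integral_pair_measure_drop_middle[OF prob_space_sample prob_space_sample PX])

definition cond_quantile_risk where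
  "cond_quantile_risk m D = (\<integral>\<^sup>+x. ennreal (qerr m D x powr k) \<partial>PX)"

lemma cond_quantile_risk_measurable[measurable]: "cond_quantile_risk m \<in> borel_measurable (sample m)"
  unfolding cond_quantile_risk_def[abs_def] using PX.borel_measurable_nn_integral_fst[OF qerr_powr_measurable] by simp

lemma nn_integral_cond_quantile_risk: "(\<integral>\<^sup>+D. cond_quantile_risk m D \<partial>sample m) = quantile_risk m"
  unfolding cond_quantile_risk_def quantile_risk_def using PX.nn_integral_fst[OF qerr_powr_measurable] by simp

lemma emeasure_qerr_gt_le:
  assumes D: "D \<in> space (sample m)" and c: "c > 0"
  shows "emeasure PX {x \<in> space PX. c < qerr m D x} \<le> cond_quantile_risk m D * ennreal (1 / c powr k)"
proof -
  note [measurable] = qerr_section_measurable[OF D]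
  have "emeasure PX {x \<in> space PX. c < qerr m D x} = (\<integral>\<^sup>+x. indicator {x \<in> space PX. c < qerr m D x} x \<partial>PX)"
    by (rule nn_integral_indicator[symmetric]) measurable
  also have "\<dots> \<le> (\<integral>\<^sup>+x. ennreal (qerr m D x powr k) * ennreal (1 / c powr k) \<partial>PX)"
  proof (rule nn_integral_mono)
    fix x assume x: "x \<in> space PX"
    have "c < qerr m D x \<Longrightarrow> 1 \<le> qerr m D x powr k * (1 / c powr k)"
      using c k by (simp add: field_simps powr_mono2)
    then show "indicator {x \<in> space PX. c < qerr m D x} x \<le> ennreal (qerr m D x powr k) * ennreal (1 / c powr k)"
      using x by (auto simp: indicator_def ennreal_mult[symmetric] intro!: ennreal_leI)
  qed
  also have "\<dots> = cond_quantile_risk m D * ennreal (1 / c powr k)"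
    unfolding cond_quantile_risk_def by (rule nn_integral_multc) measurable
  finally show ?thesis .
qed

lemma werr_calib_measurable[measurable]:
  "i < n \<Longrightarrow> (\<lambda>u. werr m (fst u, snd u i)) \<in> borel_measurable (sample m \<Otimes>\<^sub>M sample n)"
  by measurable

definition calib_werr_sum where
  "calib_werr_sum m n u = (\<Sum>i<n. ennreal (werr m (fst u, snd u i)))"

lemma calib_werr_sum_measurable[measurable]: "calib_werr_sum m n \<in> borel_measurable (sample m \<Otimes>\<^sub>M sample n)"
  unfolding calib_werr_sum_def[abs_def] by measurable

lemma nn_integral_calib_werr_sum:
  "(\<integral>\<^sup>+u. calib_werr_sum m n u \<partial>(sample m \<Otimes>\<^sub>M sample n)) = of_nat n * weight_risk m"
proof -
  interpret Mn: prob_space "sample n" by (rule prob_space_sample)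
  have "(\<integral>\<^sup>+u. ennreal (werr m (fst u, snd u i)) \<partial>(sample m \<Otimes>\<^sub>M sample n)) = weight_risk m" if i: "i < n" for i
  proof -
    have "(\<integral>\<^sup>+u. ennreal (werr m (fst u, snd u i)) \<partial>(sample m \<Otimes>\<^sub>M sample n))
        = (\<integral>\<^sup>+D. \<integral>\<^sup>+Z. ennreal (werr m (fst (D, Z), snd (D, Z) i)) \<partial>sample n \<partial>sample m)"
      using i by (intro Mn.nn_integral_fst[symmetric]) measurable
    also have "\<dots> = (\<integral>\<^sup>+D. \<integral>\<^sup>+z. ennreal (werr m (D, z)) \<partial>Pb \<partial>sample m)"
    proof (rule nn_integral_cong)
      fix D assume "D \<in> space (sample m)"
      then show "(\<integral>\<^sup>+Z. ennreal (werr m (fst (D, Z), snd (D, Z) i)) \<partial>sample n) = (\<integral>\<^sup>+z. ennreal (werr m (D, z)) \<partial>Pb)"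
        using nn_integral_PiM_component[OF prob_space_Pb i, of "\<lambda>z. ennreal (werr m (D, z))"]
          measurable_Pair2[OF werr_measurable] by simp
    qed
    also have "\<dots> = weight_risk m"
      unfolding weight_risk_def by (rule Pb.nn_integral_fst) measurable
    finally show ?thesis .
  qed
  then show ?thesis
    unfolding calib_werr_sum_def by (subst nn_integral_sum) auto
qed

definition calib_tail_sum where
  "calib_tail_sum n K Z = (\<Sum>i<n. ennreal (max (w (Z i) - K) 0))"

lemma calib_tail_sum_measurable[measurable]: "calib_tail_sum n K \<in> borel_measurable (sample n)"
  unfolding calib_tail_sum_def[abs_def] by measurable

lemma nn_integral_calib_tail_sum:
  assumes "0 \<le> K"
  shows "(\<integral>\<^sup>+Z. calib_tail_sum n K Z \<partial>sample n) = of_nat n * ennreal (\<integral>z. max (w z - K) 0 \<partial>Pb)"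
proof -
  have "(\<integral>\<^sup>+Z. ennreal (max (w (Z i) - K) 0) \<partial>sample n) = ennreal (\<integral>z. max (w z - K) 0 \<partial>Pb)"
    if i: "i < n" for i
  proof -
    have "(\<integral>\<^sup>+Z. ennreal (max (w (Z i) - K) 0) \<partial>sample n) = (\<integral>\<^sup>+z. ennreal (max (w z - K) 0) \<partial>Pb)"
      by (rule nn_integral_PiM_component[OF prob_space_Pb i]) measurable
    also have "\<dots> = ennreal (\<integral>z. max (w z - K) 0 \<partial>Pb)"
      by (rule nn_integral_eq_integral)
        (auto intro!: Bochner_Integration.integrable_bound[OF integrable_w] simp: w_nonneg assms)
    finally show ?thesis .
  qed
  then show ?thesis
    unfolding calib_tail_sum_def by (subst nn_integral_sum) auto
qed

definition negative_weight_prob where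
  "negative_weight_prob m u = emeasure (Pstar (snd u)) {y. w_hat m (fst u) (snd u) y < 0}"

lemma negative_weight_prob_measurable[measurable]:
  "negative_weight_prob m \<in> borel_measurable (sample m \<Otimes>\<^sub>M PX)"
proof -
  have proj: "(\<lambda>v. (fst (fst v), (snd (fst v), snd v))) \<in> (sample m \<Otimes>\<^sub>M PX) \<Otimes>\<^sub>M borel \<rightarrow>\<^sub>M sample m \<Otimes>\<^sub>M Pb"
    by measurable
  have wm: "(\<lambda>v. w_hat m (fst (fst v)) (snd (fst v)) (snd v)) \<in> borel_measurable ((sample m \<Otimes>\<^sub>M PX) \<Otimes>\<^sub>M borel)"
    using measurable_compose[OF proj w_hat_measurable] by (simp add: comp_def)
  have "(SIGMA u:space (sample m \<Otimes>\<^sub>M PX). {y. w_hat m (fst u) (snd u) y < 0})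
      = {v \<in> space ((sample m \<Otimes>\<^sub>M PX) \<Otimes>\<^sub>M borel). w_hat m (fst (fst v)) (snd (fst v)) (snd v) < 0}"
    by (auto simp: space_pair_measure)
  also have "\<dots> \<in> sets ((sample m \<Otimes>\<^sub>M PX) \<Otimes>\<^sub>M borel)"
    using wm by measurable
  finally show ?thesis
    unfolding negative_weight_prob_def[abs_def]
    by (rule emeasure_measurable_subprob_algebra2) (rule measurable_prob_algebraD, measurable)
qed

lemma nn_integral_negative_weight_prob_le:
  "(\<integral>\<^sup>+u. negative_weight_prob m u \<partial>(sample m \<Otimes>\<^sub>M PX)) \<le> weight_risk m"
proof -
  have "(\<integral>\<^sup>+u. negative_weight_prob m u \<partial>(sample m \<Otimes>\<^sub>M PX))
      = (\<integral>\<^sup>+D. \<integral>\<^sup>+x. negative_weight_prob m (D, x) \<partial>PX \<partial>sample m)"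
    by (rule PX.nn_integral_fst[symmetric]) measurable
  also have "\<dots> \<le> (\<integral>\<^sup>+D. \<integral>\<^sup>+z. ennreal (werr m (D, z)) \<partial>Pb \<partial>sample m)"
  proof (rule nn_integral_mono)
    fix D assume D: "D \<in> space (sample m)"
    note [measurable] = w_hat_section_measurable[OF D]
    define A where "A = {xy \<in> space (PX \<Otimes>\<^sub>M borel). w_hat m D (fst xy) (snd xy) < 0}"
    have A: "A \<in> sets (PX \<Otimes>\<^sub>M borel)" unfolding A_def by measurable
    have "(\<integral>\<^sup>+x. negative_weight_prob m (D, x) \<partial>PX) = emeasure Ps A"
      unfolding emeasure_Ps[OF A]
      by (intro nn_integral_cong) (auto simp: negative_weight_prob_def A_def space_pair_measure)
    also have "\<dots> \<le> (\<integral>\<^sup>+z. ennreal (werr m (D, z)) \<partial>Pb)"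
      unfolding A_def werr_def using emeasure_Ps_negative_weight_le[OF D] by simp
    finally show "(\<integral>\<^sup>+x. negative_weight_prob m (D, x) \<partial>PX) \<le> (\<integral>\<^sup>+z. ennreal (werr m (D, z)) \<partial>Pb)" .
  qed
  also have "\<dots> = weight_risk m"
    unfolding weight_risk_def by (rule Pb.nn_integral_fst) measurable
  finally show ?thesis .
qed

definition truncated_deficit_event where
  "truncated_deficit_event n K \<epsilon> = {Z \<in> space (sample n).
     (\<Sum>i<n. min (w (Z i)) K) \<le> real n * (\<integral>z. min (w z) K \<partial>Pb) - real n * \<epsilon>}"

lemma truncated_deficit_event_sets[measurable]: "truncated_deficit_event n K \<epsilon> \<in> sets (sample n)"
  unfolding truncated_deficit_event_def by measurable

lemma emeasure_truncated_deficit_event: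
  assumes "n > 0" and "K > 0" and "\<epsilon> \<ge> 0"
  shows "emeasure (sample n) (truncated_deficit_event n K \<epsilon>) \<le> ennreal (exp (- 2 * real n * \<epsilon>\<^sup>2 / K\<^sup>2))"
  unfolding truncated_deficit_event_def
  by (rule Hoeffding_PiM(2)[OF prob_space_Pb _ _ assms(2,1,3)]) (use assms(2) w_nonneg in auto)

definition eps where
  "eps \<zeta> = b1 * \<zeta> / 24"

definition delta where
  "delta \<zeta> = b1 * \<zeta> / 8 * (\<zeta> / 2) powr k"

definition band_weight where
  "band_weight m \<zeta> K D z = (if score m D (fst z) (snd z) \<le> -\<zeta> then min (w z) K else 0)"

lemma band_weight_measurable[measurable]:
  "(\<lambda>u. band_weight m \<zeta> K (fst u) (snd u)) \<in> borel_measurable (sample m \<Otimes>\<^sub>M Pb)"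
  unfolding band_weight_def by measurable

lemma band_weight_section_measurable: "D \<in> space (sample m) \<Longrightarrow> band_weight m \<zeta> K D \<in> borel_measurable Pb"
  using measurable_Pair2[OF band_weight_measurable, of D] by simp

lemma band_weight_calib_measurable[measurable]:
  "i < n \<Longrightarrow> (\<lambda>u. band_weight m \<zeta> K (fst u) (snd u i)) \<in> borel_measurable (sample m \<Otimes>\<^sub>M sample n)"
  using measurable_compose[of "\<lambda>u. (fst u, snd u i)" _ "sample m \<Otimes>\<^sub>M Pb", OF _ band_weight_measurable]
  by (simp add: comp_def)

lemma integral_band_weight_le:
  assumes D: "D \<in> space (sample m)" and z: "0 < \<zeta>" "\<zeta> \<le> 2 * r" "b1 * \<zeta> \<le> 2 * (1 - \<alpha>)"
    and K: "K > 0" and risk: "cond_quantile_risk m D < ennreal (delta \<zeta>)"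
  shows "(\<integral>z. band_weight m \<zeta> K D z \<partial>Pb) \<le> 1 - \<alpha> - 3 * b1 * \<zeta> / 8"
proof -
  note [measurable] = score_section_measurable[OF D]
  define A where "A = {xy \<in> space (PX \<Otimes>\<^sub>M borel). score m D (fst xy) (snd xy) \<le> -\<zeta>}"
  have A: "A \<in> sets (PX \<Otimes>\<^sub>M borel)" unfolding A_def by measurable
  have "cond_quantile_risk m D * ennreal (1 / (\<zeta> / 2) powr k) \<le> ennreal (b1 * \<zeta> / 8)"
    by (rule ennreal_mult_inverse_le[OF less_imp_le[OF risk[unfolded delta_def]]]) (use z b1 in simp_all)
  with emeasure_qerr_gt_le[OF D half_gt_zero[OF z(1)]]
  have "emeasure PX {x \<in> space PX. \<zeta> / 2 < qerr m D x} \<le> ennreal (b1 * \<zeta> / 8)"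
    by (rule order_trans)
  then have "ennreal (1 - \<alpha> - b1 * \<zeta> / 2) + emeasure PX {x \<in> space PX. \<zeta> / 2 < qerr m D x}
      \<le> ennreal (1 - \<alpha> - b1 * \<zeta> / 2) + ennreal (b1 * \<zeta> / 8)"
    by (rule add_left_mono)
  with emeasure_Ps_score_le[OF D z]
  have "emeasure Ps A \<le> ennreal (1 - \<alpha> - b1 * \<zeta> / 2) + ennreal (b1 * \<zeta> / 8)"
    unfolding A_def by (rule order_trans)
  also have "\<dots> = ennreal (1 - \<alpha> - 3 * b1 * \<zeta> / 8)"
    using z b1 by (subst ennreal_plus[symmetric]) (simp_all add: algebra_simps)
  finally have PsA: "emeasure Ps A \<le> ennreal (1 - \<alpha> - 3 * b1 * \<zeta> / 8)" .
  have "integrable Pb (band_weight m \<zeta> K D)"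
    by (rule Bochner_Integration.integrable_bound[where f="\<lambda>_. K"])
      (use K w_nonneg band_weight_section_measurable[OF D] in \<open>auto simp: band_weight_def\<close>)
  then have "ennreal (\<integral>z. band_weight m \<zeta> K D z \<partial>Pb) = (\<integral>\<^sup>+z. ennreal (band_weight m \<zeta> K D z) \<partial>Pb)"
    by (rule nn_integral_eq_integral[symmetric]) (use K w_nonneg in \<open>auto simp: band_weight_def\<close>)
  also have "\<dots> \<le> (\<integral>\<^sup>+xy. ennreal (w xy) * indicator A xy \<partial>Pb)"
    by (intro nn_integral_mono) (auto simp: band_weight_def A_def space_Pb intro: ennreal_leI)
  also have "\<dots> = emeasure Ps A" by (rule emeasure_Ps_eq_nn_integral_w[OF A, symmetric])
  finally have "ennreal (\<integral>z. band_weight m \<zeta> K D z \<partial>Pb) \<le> ennreal (1 - \<alpha> - 3 * b1 * \<zeta> / 8)"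
    using PsA by (rule order_trans)
  moreover have "0 \<le> 1 - \<alpha> - 3 * (b1 * \<zeta>) / 8" using z(3) alpha by argo
  then have "0 \<le> 1 - \<alpha> - 3 * b1 * \<zeta> / 8" by (simp add: mult.assoc)
  ultimately show ?thesis using ennreal_le_iff by blast
qed

definition band_excess_event where
  "band_excess_event m n \<zeta> K = {u \<in> space (sample m \<Otimes>\<^sub>M sample n). cond_quantile_risk m (fst u) < ennreal (delta \<zeta>) \<and>
     real n * (1 - \<alpha> - 8 * eps \<zeta>) \<le> (\<Sum>i<n. band_weight m \<zeta> K (fst u) (snd u i))}"

lemma band_excess_event_sets[measurable]: "band_excess_event m n \<zeta> K \<in> sets (sample m \<Otimes>\<^sub>M sample n)"
  unfolding band_excess_event_def by measurable

text \<open>Hoeffding's inequality, applied conditionally on the training sample.\<close>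

lemma emeasure_band_excess_event:
  assumes n: "n > 0" and z: "0 < \<zeta>" "\<zeta> \<le> 2 * r" "b1 * \<zeta> \<le> 2 * (1 - \<alpha>)" and K: "K > 0"
  shows "emeasure (sample m \<Otimes>\<^sub>M sample n) (band_excess_event m n \<zeta> K)
           \<le> ennreal (exp (- 2 * real n * (eps \<zeta>)\<^sup>2 / K\<^sup>2))"
proof -
  interpret Mn: prob_space "sample n" by (rule prob_space_sample)
  interpret Mm: prob_space "sample m" by (rule prob_space_sample)
  have e0: "eps \<zeta> \<ge> 0" using b1 z by (simp add: eps_def)
  have "emeasure (sample m \<Otimes>\<^sub>M sample n) (band_excess_event m n \<zeta> K)
      = (\<integral>\<^sup>+D. emeasure (sample n) (Pair D -` band_excess_event m n \<zeta> K) \<partial>sample m)"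
    by (rule Mn.emeasure_pair_measure_alt) simp
  also have "\<dots> \<le> (\<integral>\<^sup>+D. ennreal (exp (- 2 * real n * (eps \<zeta>)\<^sup>2 / K\<^sup>2)) \<partial>sample m)"
  proof (rule nn_integral_mono)
    fix D assume D: "D \<in> space (sample m)"
    note g = band_weight_section_measurable[OF D, of \<zeta> K]
    show "emeasure (sample n) (Pair D -` band_excess_event m n \<zeta> K) \<le> ennreal (exp (- 2 * real n * (eps \<zeta>)\<^sup>2 / K\<^sup>2))"
    proof (cases "cond_quantile_risk m D < ennreal (delta \<zeta>)")
      case False
      then show ?thesis by (simp add: band_excess_event_def)
    next
      case True
      have "3 * b1 * \<zeta> / 8 = 9 * eps \<zeta>" by (simp add: eps_def field_simps)
      then have "(\<integral>z. band_weight m \<zeta> K D z \<partial>Pb) + eps \<zeta> \<le> 1 - \<alpha> - 8 * eps \<zeta>"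
        using integral_band_weight_le[OF D z K True] by linarith
      then have "real n * (\<integral>z. band_weight m \<zeta> K D z \<partial>Pb) + real n * eps \<zeta> \<le> real n * (1 - \<alpha> - 8 * eps \<zeta>)"
        by (metis distrib_left mult_left_mono of_nat_0_le_iff)
      then have "Pair D -` band_excess_event m n \<zeta> K \<subseteq> {Z \<in> space (sample n).
                   real n * (\<integral>z. band_weight m \<zeta> K D z \<partial>Pb) + real n * eps \<zeta> \<le> (\<Sum>i<n. band_weight m \<zeta> K D (Z i))}"
        by (auto simp: band_excess_event_def space_pair_measure)
      then have "emeasure (sample n) (Pair D -` band_excess_event m n \<zeta> K) \<le> emeasure (sample n) {Z \<in> space (sample n).
                   real n * (\<integral>z. band_weight m \<zeta> K D z \<partial>Pb) + real n * eps \<zeta> \<le> (\<Sum>i<n. band_weight m \<zeta> K D (Z i))}"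
        by (rule emeasure_mono) (use g in measurable)
      also have "\<dots> \<le> ennreal (exp (- 2 * real n * (eps \<zeta>)\<^sup>2 / K\<^sup>2))"
        by (rule Hoeffding_PiM(1)[OF prob_space_Pb g _ K n e0]) (use K w_nonneg in \<open>auto simp: band_weight_def\<close>)
      finally show ?thesis .
    qed
  qed
  also have "\<dots> = ennreal (exp (- 2 * real n * (eps \<zeta>)\<^sup>2 / K\<^sup>2))"
    by (simp add: Mm.emeasure_space_1)
  finally show ?thesis .
qed

text \<open>Each summand dominates the indicator of one exceptional event, so the majorant is \<ge> 1 on
  the undercoverage event, while its integral is small by Markov's and Hoeffding's inequalities.\<close>

definition majorant where
  "majorant \<zeta> K m n \<omega> =
       cond_quantile_risk m (fst (fst \<omega>)) * ennreal (1 / delta \<zeta>)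
     + calib_werr_sum m n (fst \<omega>) * ennreal (1 / (real n * eps \<zeta>))
     + indicator (truncated_deficit_event n K (eps \<zeta>)) (snd (fst \<omega>))
     + calib_tail_sum n K (snd (fst \<omega>)) * ennreal (1 / (real n * eps \<zeta>))
     + indicator (band_excess_event m n \<zeta> K) (fst \<omega>)
     + ennreal (qerr m (fst (fst \<omega>)) (snd \<omega>) powr k) * ennreal (1 / (\<zeta> / 2) powr k)
     + negative_weight_prob m (fst (fst \<omega>), snd \<omega>) * ennreal (1 / (t / 2))"

lemma majorant_measurable[measurable]: "majorant \<zeta> K m n \<in> borel_measurable (Omega m n)"
proof -
  have proj: "(\<lambda>\<omega>. (fst (fst \<omega>), snd \<omega>)) \<in> Omega m n \<rightarrow>\<^sub>M sample m \<Otimes>\<^sub>M PX" by measurable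
  show ?thesis
    using measurable_compose[OF proj qerr_powr_measurable[of m]]
      measurable_compose[OF proj negative_weight_prob_measurable[of m]]
    unfolding majorant_def[abs_def] by (simp add: comp_def)
qed

lemma good_sample_of_majorant_lt_1:
  assumes n: "n > 0" and z: "0 < \<zeta>" "b1 * \<zeta> \<le> 2 * (1 - \<alpha>)"
    and K: "K > 0" and tail: "(\<integral>z. max (w z - K) 0 \<partial>Pb) \<le> eps \<zeta>"
    and DZ: "D \<in> space (sample m)" "Z \<in> space (sample n)" and x: "x \<in> space PX"
    and lt: "majorant \<zeta> K m n ((D, Z), x) < 1"
  shows "(\<Sum>i<n. \<bar>w_hat m D (fst (Z i)) (snd (Z i)) - w (Z i)\<bar>) < real n * eps \<zeta>"
    and "real n * (1 - 2 * eps \<zeta>) < (\<Sum>i<n. min (w (Z i)) K)"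
    and "(\<Sum>i<n. max (w (Z i) - K) 0) < real n * eps \<zeta>"
    and "(\<Sum>i<n. if score m D (fst (Z i)) (snd (Z i)) \<le> -\<zeta> then min (w (Z i)) K else 0)
           < real n * (1 - \<alpha> - 8 * eps \<zeta>)"
    and "qerr m D x < \<zeta> / 2"
    and "measure (Pstar x) {y. w_hat m D x y < 0} < t / 2"
proof -
  interpret real_distribution "Pstar x" by (rule real_distribution_Pstar[OF x])
  have e0: "0 < eps \<zeta>" using b1 z by (simp add: eps_def)
  have ne0: "0 < real n * eps \<zeta>" using n e0 by simp
  have d0: "0 < delta \<zeta>" using b1 z by (simp add: delta_def)
  have c0: "0 < (\<zeta> / 2) powr k" using z by simp
  have p: "cond_quantile_risk m D * ennreal (1 / delta \<zeta>) < 1"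
    "calib_werr_sum m n (D, Z) * ennreal (1 / (real n * eps \<zeta>)) < 1"
    "indicator (truncated_deficit_event n K (eps \<zeta>)) Z < (1::ennreal)"
    "calib_tail_sum n K Z * ennreal (1 / (real n * eps \<zeta>)) < 1"
    "indicator (band_excess_event m n \<zeta> K) (D, Z) < (1::ennreal)"
    "ennreal (qerr m D x powr k) * ennreal (1 / (\<zeta> / 2) powr k) < 1"
    "negative_weight_prob m (D, x) * ennreal (1 / (t / 2)) < 1"
    using lt unfolding majorant_def fst_conv snd_conv
    by (auto elim!: le_less_trans[rotated] intro: add_increasing add_increasing2)
  have "calib_werr_sum m n (D, Z) < ennreal (real n * eps \<zeta>)"
    by (rule less_ennreal_of_mult_inverse_less_1[OF ne0 p(2)])
  then show "(\<Sum>i<n. \<bar>w_hat m D (fst (Z i)) (snd (Z i)) - w (Z i)\<bar>) < real n * eps \<zeta>"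
    by (simp add: calib_werr_sum_def werr_def ennreal_less_iff)
  have "Z \<notin> truncated_deficit_event n K (eps \<zeta>)"
    using p(3) by (auto simp: indicator_def)
  then have "real n * (\<integral>z. min (w z) K \<partial>Pb) - real n * eps \<zeta> < (\<Sum>i<n. min (w (Z i)) K)"
    using DZ(2) by (auto simp: truncated_deficit_event_def)
  moreover have "1 - eps \<zeta> \<le> (\<integral>z. min (w z) K \<partial>Pb)" using integral_min_w[of K] K tail by simp
  ultimately show "real n * (1 - 2 * eps \<zeta>) < (\<Sum>i<n. min (w (Z i)) K)"
    by (smt (verit, best) mult_left_mono of_nat_0_le_iff right_diff_distrib)
  have "ennreal (\<Sum>i<n. max (w (Z i) - K) 0) < ennreal (real n * eps \<zeta>)"
    using less_ennreal_of_mult_inverse_less_1[OF ne0 p(4)] unfolding calib_tail_sum_def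
    by (subst sum_ennreal[symmetric]) simp_all
  then show "(\<Sum>i<n. max (w (Z i) - K) 0) < real n * eps \<zeta>"
    by (subst (asm) ennreal_less_iff) (auto intro: sum_nonneg)
  have "cond_quantile_risk m D < ennreal (delta \<zeta>)"
    by (rule less_ennreal_of_mult_inverse_less_1[OF d0 p(1)])
  moreover have "(D, Z) \<notin> band_excess_event m n \<zeta> K"
    using p(5) by (auto simp: indicator_def)
  ultimately have "(\<Sum>i<n. band_weight m \<zeta> K D (Z i)) < real n * (1 - \<alpha> - 8 * eps \<zeta>)"
    using DZ by (auto simp: band_excess_event_def space_pair_measure)
  then show "(\<Sum>i<n. if score m D (fst (Z i)) (snd (Z i)) \<le> -\<zeta> then min (w (Z i)) K else 0)
           < real n * (1 - \<alpha> - 8 * eps \<zeta>)"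
    by (simp add: band_weight_def)
  have "qerr m D x powr k < (\<zeta> / 2) powr k"
    using less_ennreal_of_mult_inverse_less_1[OF c0 p(6)] by (simp add: ennreal_less_iff)
  then show "qerr m D x < \<zeta> / 2"
    using powr_mono2[of k "\<zeta> / 2" "qerr m D x"] z k by (force simp: not_less[symmetric])
  have "ennreal (measure (Pstar x) {y. w_hat m D x y < 0}) < ennreal (t / 2)"
    using less_ennreal_of_mult_inverse_less_1[OF _ p(7)] t
    by (simp add: negative_weight_prob_def emeasure_eq_measure)
  then show "measure (Pstar x) {y. w_hat m D x y < 0} < t / 2"
    by (subst (asm) ennreal_less_iff) auto
qed

lemma undercoverage_subset_majorant:
  assumes n: "n > 0"
    and z: "0 < \<zeta>" "\<zeta> \<le> r / 2" "3 * b2 * \<zeta> \<le> t / 2" "b1 * \<zeta> \<le> 2 * (1 - \<alpha>)"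
    and K: "K > 0" and tail: "(\<integral>z. max (w z - K) 0 \<partial>Pb) \<le> eps \<zeta>"
  shows "undercoverage m n \<subseteq> {\<omega> \<in> space (Omega m n). 1 \<le> majorant \<zeta> K m n \<omega>}"
proof safe
  fix D Z x assume \<omega>: "((D, Z), x) \<in> undercoverage m n"
  then have DZx: "D \<in> space (sample m)" "Z \<in> space (sample n)" "x \<in> space PX"
    and \<omega>': "((D, Z), x) \<in> space (Omega m n)"
    by (auto simp: undercoverage_def space_pair_measure)
  show "((D, Z), x) \<in> space (Omega m n)" by (rule \<omega>')
  show "1 \<le> majorant \<zeta> K m n ((D, Z), x)"
  proof (rule ccontr)
    assume "\<not> 1 \<le> majorant \<zeta> K m n ((D, Z), x)"
    then have "majorant \<zeta> K m n ((D, Z), x) < 1" by simp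
    note good = good_sample_of_majorant_lt_1[OF n z(1,4) K tail DZx this]
    have e: "0 < eps \<zeta>" "3 * eps \<zeta> < 1"
      using b1 z(1,4) alpha(1) unfolding eps_def by (simp_all add: field_simps)
    from coverage_gt_of_good_sample[OF DZx(1,3) n z(1-3) e good]
    show False using \<omega> by (simp add: undercoverage_def)
  qed
qed

lemma undercoverage_le_nn_integral_majorant:
  assumes "n > 0"
    and "0 < \<zeta>" "\<zeta> \<le> r / 2" "3 * b2 * \<zeta> \<le> t / 2" "b1 * \<zeta> \<le> 2 * (1 - \<alpha>)"
    and "K > 0" and "(\<integral>z. max (w z - K) 0 \<partial>Pb) \<le> eps \<zeta>"
  shows "outer_measure_of (Omega m n) (undercoverage m n) \<le> (\<integral>\<^sup>+\<omega>. majorant \<zeta> K m n \<omega> \<partial>Omega m n)"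
proof -
  let ?E = "{\<omega> \<in> space (Omega m n). 1 \<le> majorant \<zeta> K m n \<omega>}"
  have "outer_measure_of (Omega m n) (undercoverage m n) \<le> outer_measure_of (Omega m n) ?E"
    by (rule outer_measure_of_mono[OF undercoverage_subset_majorant[OF assms]])
  also have "\<dots> = emeasure (Omega m n) ?E"
    by (rule outer_measure_of_eq) measurable
  also have "\<dots> = (\<integral>\<^sup>+\<omega>. indicator ?E \<omega> \<partial>Omega m n)"
    by (rule nn_integral_indicator[symmetric]) measurable
  also have "\<dots> \<le> (\<integral>\<^sup>+\<omega>. majorant \<zeta> K m n \<omega> \<partial>Omega m n)"
    by (intro nn_integral_mono) (auto simp: indicator_def)
  finally show ?thesis .
qed

lemma nn_integral_majorant_le:
  assumes n: "n > 0" and z: "0 < \<zeta>" "\<zeta> \<le> 2 * r" "b1 * \<zeta> \<le> 2 * (1 - \<alpha>)" and K: "K > 0"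
  shows "(\<integral>\<^sup>+\<omega>. majorant \<zeta> K m n \<omega> \<partial>Omega m n)
     \<le> quantile_risk m * ennreal (1 / delta \<zeta>) + weight_risk m * ennreal (1 / eps \<zeta>)
       + ennreal (exp (- 2 * real n * (eps \<zeta>)\<^sup>2 / K\<^sup>2))
       + ennreal (\<integral>z. max (w z - K) 0 \<partial>Pb) * ennreal (1 / eps \<zeta>)
       + ennreal (exp (- 2 * real n * (eps \<zeta>)\<^sup>2 / K\<^sup>2))
       + quantile_risk m * ennreal (1 / (\<zeta> / 2) powr k) + weight_risk m * ennreal (1 / (t / 2))"
proof -
  have e0: "eps \<zeta> > 0" using b1 z by (simp add: eps_def)
  define P1 where "P1 \<omega> = cond_quantile_risk m (fst (fst \<omega>)) * ennreal (1 / delta \<zeta>)" for \<omega> :: "((nat \<Rightarrow> 'a \<times> real) \<times> (nat \<Rightarrow> 'a \<times> real)) \<times> 'a"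
  define P2 where "P2 \<omega> = calib_werr_sum m n (fst \<omega>) * ennreal (1 / (real n * eps \<zeta>))" for \<omega> :: "((nat \<Rightarrow> 'a \<times> real) \<times> (nat \<Rightarrow> 'a \<times> real)) \<times> 'a"
  define P3 where "P3 \<omega> = (indicator (truncated_deficit_event n K (eps \<zeta>)) (snd (fst \<omega>)) :: ennreal)" for \<omega> :: "((nat \<Rightarrow> 'a \<times> real) \<times> (nat \<Rightarrow> 'a \<times> real)) \<times> 'a"
  define P4 where "P4 \<omega> = calib_tail_sum n K (snd (fst \<omega>)) * ennreal (1 / (real n * eps \<zeta>))" for \<omega> :: "((nat \<Rightarrow> 'a \<times> real) \<times> (nat \<Rightarrow> 'a \<times> real)) \<times> 'a"
  define P5 where "P5 \<omega> = (indicator (band_excess_event m n \<zeta> K) (fst \<omega>) :: ennreal)" for \<omega> :: "((nat \<Rightarrow> 'a \<times> real) \<times> (nat \<Rightarrow> 'a \<times> real)) \<times> 'a"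
  define P6 where "P6 \<omega> = ennreal (qerr m (fst (fst \<omega>)) (snd \<omega>) powr k) * ennreal (1 / (\<zeta> / 2) powr k)" for \<omega> :: "((nat \<Rightarrow> 'a \<times> real) \<times> (nat \<Rightarrow> 'a \<times> real)) \<times> 'a"
  define P7 where "P7 \<omega> = negative_weight_prob m (fst (fst \<omega>), snd \<omega>) * ennreal (1 / (t / 2))" for \<omega> :: "((nat \<Rightarrow> 'a \<times> real) \<times> (nat \<Rightarrow> 'a \<times> real)) \<times> 'a"
  have proj: "(\<lambda>\<omega>. (fst (fst \<omega>), snd \<omega>)) \<in> Omega m n \<rightarrow>\<^sub>M sample m \<Otimes>\<^sub>M PX" by measurable
  have [measurable]: "P1 \<in> borel_measurable (Omega m n)" "P2 \<in> borel_measurable (Omega m n)"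
    "P3 \<in> borel_measurable (Omega m n)" "P4 \<in> borel_measurable (Omega m n)" "P5 \<in> borel_measurable (Omega m n)"
    unfolding P1_def[abs_def] P2_def[abs_def] P3_def[abs_def] P4_def[abs_def] P5_def[abs_def] by measurable
  have [measurable]: "P6 \<in> borel_measurable (Omega m n)" "P7 \<in> borel_measurable (Omega m n)"
    using measurable_compose[OF proj qerr_powr_measurable[of m]]
      measurable_compose[OF proj negative_weight_prob_measurable[of m]]
    unfolding P6_def[abs_def] P7_def[abs_def] by (simp_all add: comp_def)
  have "majorant \<zeta> K m n = (\<lambda>\<omega>. P1 \<omega> + P2 \<omega> + P3 \<omega> + P4 \<omega> + P5 \<omega> + P6 \<omega> + P7 \<omega>)"
    by (simp add: fun_eq_iff majorant_def P1_def P2_def P3_def P4_def P5_def P6_def P7_def)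
  then have "(\<integral>\<^sup>+\<omega>. majorant \<zeta> K m n \<omega> \<partial>Omega m n)
      = (\<integral>\<^sup>+\<omega>. P1 \<omega> \<partial>Omega m n) + (\<integral>\<^sup>+\<omega>. P2 \<omega> \<partial>Omega m n) + (\<integral>\<^sup>+\<omega>. P3 \<omega> \<partial>Omega m n)
      + (\<integral>\<^sup>+\<omega>. P4 \<omega> \<partial>Omega m n) + (\<integral>\<^sup>+\<omega>. P5 \<omega> \<partial>Omega m n) + (\<integral>\<^sup>+\<omega>. P6 \<omega> \<partial>Omega m n)
      + (\<integral>\<^sup>+\<omega>. P7 \<omega> \<partial>Omega m n)"
    by (simp add: nn_integral_add)
  also have "\<dots> \<le> quantile_risk m * ennreal (1 / delta \<zeta>) + weight_risk m * ennreal (1 / eps \<zeta>)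
       + ennreal (exp (- 2 * real n * (eps \<zeta>)\<^sup>2 / K\<^sup>2))
       + ennreal (\<integral>z. max (w z - K) 0 \<partial>Pb) * ennreal (1 / eps \<zeta>)
       + ennreal (exp (- 2 * real n * (eps \<zeta>)\<^sup>2 / K\<^sup>2))
       + quantile_risk m * ennreal (1 / (\<zeta> / 2) powr k) + weight_risk m * ennreal (1 / (t / 2))"
  unfolding P1_def P2_def P3_def P4_def P5_def P6_def P7_def
  proof (intro add_mono)
    have "(\<integral>\<^sup>+\<omega>. cond_quantile_risk m (fst (fst \<omega>)) * ennreal (1 / delta \<zeta>) \<partial>Omega m n)
        = (\<integral>\<^sup>+D. cond_quantile_risk m D * ennreal (1 / delta \<zeta>) \<partial>sample m)"
      by (rule nn_integral_Omega_train) measurable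
    then show "(\<integral>\<^sup>+\<omega>. cond_quantile_risk m (fst (fst \<omega>)) * ennreal (1 / delta \<zeta>) \<partial>Omega m n)
        \<le> quantile_risk m * ennreal (1 / delta \<zeta>)"
      by (simp add: nn_integral_multc nn_integral_cond_quantile_risk)
    have "(\<integral>\<^sup>+\<omega>. calib_werr_sum m n (fst \<omega>) * ennreal (1 / (real n * eps \<zeta>)) \<partial>Omega m n)
        = (\<integral>\<^sup>+u. calib_werr_sum m n u * ennreal (1 / (real n * eps \<zeta>)) \<partial>(sample m \<Otimes>\<^sub>M sample n))"
      by (rule nn_integral_Omega_samples) measurable
    then show "(\<integral>\<^sup>+\<omega>. calib_werr_sum m n (fst \<omega>) * ennreal (1 / (real n * eps \<zeta>)) \<partial>Omega m n)
        \<le> weight_risk m * ennreal (1 / eps \<zeta>)"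
      using ennreal_of_nat_mult_inverse[OF n e0] by (simp add: nn_integral_multc nn_integral_calib_werr_sum)
    have "(\<integral>\<^sup>+\<omega>. indicator (truncated_deficit_event n K (eps \<zeta>)) (snd (fst \<omega>)) \<partial>Omega m n)
        = emeasure (sample n) (truncated_deficit_event n K (eps \<zeta>))"
      by (subst nn_integral_Omega_calib) simp_all
    then show "(\<integral>\<^sup>+\<omega>. indicator (truncated_deficit_event n K (eps \<zeta>)) (snd (fst \<omega>)) \<partial>Omega m n)
        \<le> ennreal (exp (- 2 * real n * (eps \<zeta>)\<^sup>2 / K\<^sup>2))"
      using emeasure_truncated_deficit_event[OF n K] e0 by simp
    have "(\<integral>\<^sup>+\<omega>. calib_tail_sum n K (snd (fst \<omega>)) * ennreal (1 / (real n * eps \<zeta>)) \<partial>Omega m n)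
        = (\<integral>\<^sup>+Z. calib_tail_sum n K Z * ennreal (1 / (real n * eps \<zeta>)) \<partial>sample n)"
      by (rule nn_integral_Omega_calib) measurable
    then show "(\<integral>\<^sup>+\<omega>. calib_tail_sum n K (snd (fst \<omega>)) * ennreal (1 / (real n * eps \<zeta>)) \<partial>Omega m n)
        \<le> ennreal (\<integral>z. max (w z - K) 0 \<partial>Pb) * ennreal (1 / eps \<zeta>)"
      using ennreal_of_nat_mult_inverse[OF n e0] K by (simp add: nn_integral_multc nn_integral_calib_tail_sum)
    have "(\<integral>\<^sup>+\<omega>. indicator (band_excess_event m n \<zeta> K) (fst \<omega>) \<partial>Omega m n)
        = emeasure (sample m \<Otimes>\<^sub>M sample n) (band_excess_event m n \<zeta> K)"
      by (subst nn_integral_Omega_samples) simp_all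
    then show "(\<integral>\<^sup>+\<omega>. indicator (band_excess_event m n \<zeta> K) (fst \<omega>) \<partial>Omega m n)
        \<le> ennreal (exp (- 2 * real n * (eps \<zeta>)\<^sup>2 / K\<^sup>2))"
      using emeasure_band_excess_event[OF n z K] by simp
    have "(\<integral>\<^sup>+\<omega>. ennreal (qerr m (fst (fst \<omega>)) (snd \<omega>) powr k) * ennreal (1 / (\<zeta> / 2) powr k) \<partial>Omega m n)
        = (\<integral>\<^sup>+u. ennreal (qerr m (fst u) (snd u) powr k) * ennreal (1 / (\<zeta> / 2) powr k) \<partial>(sample m \<Otimes>\<^sub>M PX))"
      using nn_integral_Omega_train_test[of "\<lambda>u. ennreal (qerr m (fst u) (snd u) powr k) * ennreal (1 / (\<zeta> / 2) powr k)" m n]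
      by simp
    then show "(\<integral>\<^sup>+\<omega>. ennreal (qerr m (fst (fst \<omega>)) (snd \<omega>) powr k) * ennreal (1 / (\<zeta> / 2) powr k) \<partial>Omega m n)
        \<le> quantile_risk m * ennreal (1 / (\<zeta> / 2) powr k)"
      by (simp add: quantile_risk_def nn_integral_multc)
    have "(\<integral>\<^sup>+\<omega>. negative_weight_prob m (fst (fst \<omega>), snd \<omega>) * ennreal (1 / (t / 2)) \<partial>Omega m n)
        = (\<integral>\<^sup>+u. negative_weight_prob m u \<partial>(sample m \<Otimes>\<^sub>M PX)) * ennreal (1 / (t / 2))"
      using nn_integral_Omega_train_test[of "\<lambda>u. negative_weight_prob m u * ennreal (1 / (t / 2))" m n]
      by (simp add: nn_integral_multc)
    also have "\<dots> \<le> weight_risk m * ennreal (1 / (t / 2))"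
      by (intro mult_right_mono nn_integral_negative_weight_prob_le) simp
    finally show "(\<integral>\<^sup>+\<omega>. negative_weight_prob m (fst (fst \<omega>), snd \<omega>) * ennreal (1 / (t / 2)) \<partial>Omega m n)
        \<le> weight_risk m * ennreal (1 / (t / 2))" .
  qed
  finally show ?thesis .
qed

lemma exists_admissible_zeta:
  "\<exists>\<zeta>. 0 < \<zeta> \<and> \<zeta> \<le> r / 2 \<and> 3 * b2 * \<zeta> \<le> t / 2 \<and> b1 * \<zeta> \<le> 2 * (1 - \<alpha>)"
proof -
  define \<zeta> where "\<zeta> = min (r / 2) (min (t / (6 * b2)) ((1 - \<alpha>) / b1))"
  have "\<zeta> \<le> r / 2"
    unfolding \<zeta>_def by (rule min.cobounded1)
  have "\<zeta> \<le> t / (6 * b2)" "\<zeta> \<le> (1 - \<alpha>) / b1"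
    by (simp_all add: \<zeta>_def min_le_iff_disj)
  then have "3 * b2 * \<zeta> \<le> t / 2" "b1 * \<zeta> \<le> 2 * (1 - \<alpha>)"
    using b1 b2 alpha by (simp_all add: field_simps)
  moreover have "0 < \<zeta>"
    using r t b1 b2 alpha by (simp add: \<zeta>_def)
  ultimately show ?thesis using \<open>\<zeta> \<le> r / 2\<close> by blast
qed

theorem undercoverage_tendsto_0:
  "((\<lambda>(m, n). outer_measure_of (Omega m n) (undercoverage m n)) \<longlongrightarrow> 0) (sequentially \<times>\<^sub>F sequentially)"
proof (rule order_tendstoI)
  fix a :: ennreal assume "a < 0"
  then show "\<forall>\<^sub>F mn in sequentially \<times>\<^sub>F sequentially.
      a < (case mn of (m, n) \<Rightarrow> outer_measure_of (Omega m n) (undercoverage m n))"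
    by simp
next
  fix a :: ennreal assume "0 < a"
  then obtain a' where a': "0 < a'" "a' < a" using dense by blast
  define \<gamma> where "\<gamma> = enn2real a'"
  have ga: "0 < \<gamma>" "ennreal \<gamma> < a"
    using a' less_le_trans[OF a'(2) top_greatest] by (auto simp: \<gamma>_def enn2real_positive_iff ennreal_enn2real)
  obtain \<zeta> where z: "0 < \<zeta>" "\<zeta> \<le> r / 2" "3 * b2 * \<zeta> \<le> t / 2" "b1 * \<zeta> \<le> 2 * (1 - \<alpha>)"
    using exists_admissible_zeta by blast
  have z': "\<zeta> \<le> 2 * r" using z r by simp
  have pos: "0 < eps \<zeta>" "0 < delta \<zeta>" "0 < (\<zeta> / 2) powr k" "0 < t / 2"
    using b1 z t by (simp_all add: eps_def delta_def)
  obtain K where K: "K > 0" and tail: "(\<integral>z. max (w z - K) 0 \<partial>Pb) \<le> min (eps \<zeta>) (\<gamma> / 4 * eps \<zeta>)"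
    using exists_small_weight_tail[of "min (eps \<zeta>) (\<gamma> / 4 * eps \<zeta>)"] pos ga by auto
  have "\<forall>\<^sub>F m in sequentially. quantile_risk m < ennreal (\<gamma> / 8 * delta \<zeta>) \<and> weight_risk m < ennreal (\<gamma> / 8 * eps \<zeta>)
      \<and> quantile_risk m < ennreal (\<gamma> / 8 * (\<zeta> / 2) powr k) \<and> weight_risk m < ennreal (\<gamma> / 8 * (t / 2))"
    using pos ga by (intro eventually_conj order_tendstoD(2)[OF quantile_risk_tendsto_0]
        order_tendstoD(2)[OF weight_risk_tendsto_0]) simp_all
  moreover have "\<forall>\<^sub>F n in sequentially. 0 < n \<and> exp (- 2 * real n * (eps \<zeta>)\<^sup>2 / K\<^sup>2) < \<gamma> / 8"
    using eventually_exp_neg_less[of "(eps \<zeta>)\<^sup>2 / K\<^sup>2" "\<gamma> / 8"] pos K ga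
    by (intro eventually_conj eventually_gt_at_top) (simp_all add: times_divide_eq_right)
  moreover have "(case (m, n) of (m, n) \<Rightarrow> outer_measure_of (Omega m n) (undercoverage m n)) < a"
    if hm: "quantile_risk m < ennreal (\<gamma> / 8 * delta \<zeta>)" "weight_risk m < ennreal (\<gamma> / 8 * eps \<zeta>)"
      "quantile_risk m < ennreal (\<gamma> / 8 * (\<zeta> / 2) powr k)" "weight_risk m < ennreal (\<gamma> / 8 * (t / 2))"
      and hn: "0 < n" "exp (- 2 * real n * (eps \<zeta>)\<^sup>2 / K\<^sup>2) < \<gamma> / 8" for m n
  proof -
    have "outer_measure_of (Omega m n) (undercoverage m n) \<le> (\<integral>\<^sup>+\<omega>. majorant \<zeta> K m n \<omega> \<partial>Omega m n)"
      using undercoverage_le_nn_integral_majorant[OF hn(1) z K] tail by simp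
    also have "\<dots> \<le> ennreal \<gamma>"
      using tail by (intro order_trans[OF nn_integral_majorant_le[OF hn(1) z(1) z' z(4) K]
          ennreal_risk_terms_le[OF ga(1) pos hm hn(2)]]) simp
    finally show ?thesis using ga(2) by simp
  qed
  ultimately show "\<forall>\<^sub>F mn in sequentially \<times>\<^sub>F sequentially.
      (case mn of (m, n) \<Rightarrow> outer_measure_of (Omega m n) (undercoverage m n)) < a"
    unfolding eventually_prod_filter by blast
qed

end

theorem proposition3p3:
  fixes PX :: "'x measure" and Act :: "'a measure"
    and pib pis :: "'x \<Rightarrow> 'a measure"
    and Pout :: "'x \<times> 'a \<Rightarrow> real measure"
    and p :: "'x \<Rightarrow> real \<Rightarrow> real"
    and \<alpha> \<alpha>lo \<alpha>hi t :: real
    and qlo_hat qhi_hat :: "nat \<Rightarrow> (nat \<Rightarrow> 'x \<times> real) \<Rightarrow> 'x \<Rightarrow> real"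
    and w_hat :: "nat \<Rightarrow> (nat \<Rightarrow> 'x \<times> real) \<Rightarrow> 'x \<Rightarrow> real \<Rightarrow> real"
  defines "Pb \<equiv> joint_law PX pib Pout"
    and "Ps \<equiv> joint_law PX pis Pout"
  assumes PX: "prob_space PX"
    and pib: "pib \<in> PX \<rightarrow>\<^sub>M prob_algebra Act"
    and pis: "pis \<in> PX \<rightarrow>\<^sub>M prob_algebra Act"
    and Pout: "Pout \<in> PX \<Otimes>\<^sub>M Act \<rightarrow>\<^sub>M prob_algebra borel"
    and dens: "\<forall>x\<in>space PX. cond_law pis Pout x = density lborel (p x)"
    and p_nonneg: "\<forall>x y. 0 \<le> p x y"
    and p_meas: "(\<lambda>(x, y). p x y) \<in> borel_measurable (PX \<Otimes>\<^sub>M borel)"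
    and abs_cont: "absolutely_continuous Pb Ps"
    and alpha: "0 < \<alpha>" "\<alpha> < 1" "0 < \<alpha>lo" "\<alpha>lo < \<alpha>hi" "\<alpha>hi < 1" "\<alpha>hi - \<alpha>lo = 1 - \<alpha>"
    and qlo_meas: "\<forall>m. (\<lambda>(D, x). qlo_hat m D x) \<in> borel_measurable (PiM {..<m} (\<lambda>_. Pb) \<Otimes>\<^sub>M PX)"
    and qhi_meas: "\<forall>m. (\<lambda>(D, x). qhi_hat m D x) \<in> borel_measurable (PiM {..<m} (\<lambda>_. Pb) \<Otimes>\<^sub>M PX)"
    and w_meas: "\<forall>m. (\<lambda>(D, xy). w_hat m D (fst xy) (snd xy)) \<in> borel_measurable (PiM {..<m} (\<lambda>_. Pb) \<Otimes>\<^sub>M Pb)"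
    and A1: "(\<lambda>m. \<integral>\<^sup>+ (D, xy). ennreal \<bar>w_hat m D (fst xy) (snd xy) - enn2real (RN_deriv Pb Ps xy)\<bar>
                 \<partial>(PiM {..<m} (\<lambda>_. Pb) \<Otimes>\<^sub>M Pb)) \<longlonglongrightarrow> 0"
    and A2: "\<exists>r b1 b2. r > 0 \<and> b1 > 0 \<and> b2 > 0 \<and>
              (\<forall>x\<in>space PX. \<forall>y.
                 (\<bar>y - quantile_of \<alpha>lo (cond_law pis Pout x)\<bar> \<le> r \<or>
                  \<bar>y - quantile_of \<alpha>hi (cond_law pis Pout x)\<bar> \<le> r)
                 \<longrightarrow> b1 \<le> p x y \<and> p x y \<le> b2)"
    and A3: "\<exists>k>0. (\<lambda>m. \<integral>\<^sup>+ (D, x). ennreal ((max \<bar>qlo_hat m D x - quantile_of \<alpha>lo (cond_law pis Pout x)\<bar>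
                                                 \<bar>qhi_hat m D x - quantile_of \<alpha>hi (cond_law pis Pout x)\<bar>) powr k)
                 \<partial>(PiM {..<m} (\<lambda>_. Pb) \<Otimes>\<^sub>M PX)) \<longlonglongrightarrow> 0"
    and t: "t > 0"
  shows "((\<lambda>(m, n). outer_measure_of
             ((PiM {..<m} (\<lambda>_. Pb) \<Otimes>\<^sub>M PiM {..<n} (\<lambda>_. Pb)) \<Otimes>\<^sub>M PX)
             {((D, Z), x) \<in> space ((PiM {..<m} (\<lambda>_. Pb) \<Otimes>\<^sub>M PiM {..<n} (\<lambda>_. Pb)) \<Otimes>\<^sub>M PX).
                measure (cond_law pis Pout x)
                  (conformal_set \<alpha> n Z (w_hat m D)
                     (\<lambda>x y. max (y - qhi_hat m D x) (qlo_hat m D x - y)) x)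
                \<le> 1 - \<alpha> - t})
         \<longlongrightarrow> 0) (sequentially \<times>\<^sub>F sequentially)"
proof -
  obtain r b1 b2 where rb: "r > 0" "b1 > 0" "b2 > 0"
    and A2': "\<forall>x\<in>space PX. \<forall>y.
           (\<bar>y - quantile_of \<alpha>lo (cond_law pis Pout x)\<bar> \<le> r \<or> \<bar>y - quantile_of \<alpha>hi (cond_law pis Pout x)\<bar> \<le> r)
           \<longrightarrow> b1 \<le> p x y \<and> p x y \<le> b2"
    using A2 by blast
  obtain k where k: "k > 0"
    and A3': "(\<lambda>m. \<integral>\<^sup>+ (D, x). ennreal ((max \<bar>qlo_hat m D x - quantile_of \<alpha>lo (cond_law pis Pout x)\<bar>
                                      \<bar>qhi_hat m D x - quantile_of \<alpha>hi (cond_law pis Pout x)\<bar>) powr k)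
                 \<partial>(PiM {..<m} (\<lambda>_. Pb) \<Otimes>\<^sub>M PX)) \<longlonglongrightarrow> 0"
    using A3 by blast
  interpret off_policy_consistency PX Act pib pis Pout p \<alpha> \<alpha>lo \<alpha>hi Pb Ps r b1 b2 qlo_hat qhi_hat w_hat k t
    by (intro off_policy_consistency.intro off_policy_estimators.intro off_policy_local_density.intro
        off_policy.intro off_policy_consistency_axioms.intro off_policy_estimators_axioms.intro
        off_policy_local_density_axioms.intro; (fact | simp only: Pb_def Ps_def))
  have "(\<lambda>x y. max (y - qhi_hat m D x) (qlo_hat m D x - y)) = score m D" for m D
    by (simp add: score_def fun_eq_iff)
  then show ?thesis
    using undercoverage_tendsto_0 by (simp add: undercoverage_def)
qed

end
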